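(* Let $B$ be a cubic 3-connected graph and, for each $u\in V(B)$, let $A^u$ be a cubic 3-connected graph with a vertex $a^u$, all disjoint, and let $G=B\{(A^u,a^u):u\in V(B)\}$ (for any choice of the bijections in the construction). Suppose that (h0) $v(B)\equiv 0\pmod 6$ and $v(A^u)\equiv 2\pmod 6$ for every $u$ (so $v(G)\equiv 0\pmod 6$); (h1) for every $u$ and every vertex $x$ of $A^u-(N(a^u)\cup\{a^u\})$ adjacent to a vertex of $N(a^u)$, the graph $A^u-(N(a^u)\cup\{a^u,x\})$ has no $\Lambda$-factor; (h2) for every $u$ and every edge $a^uz\in E(A^u)$, $A^u-\{a^u,z\}$ has a $\Lambda$-factor; (h3) for every $u$ and every 5-vertex path $W$ in $A^u$ with center vertex $a^u$, $A^u-W$ has a $\Lambda$-factor. Then: (a1) if $P$ is a $\Lambda$-factor of $G$, then $\alpha^{-1}(E(P)\cap E'(G))$ is the edge set of a $\Lambda$-factor $Q$ of $B$, and $\vec F(P,G)=\vec Q$; (a2) if $P$ is a $\Lambda$-factor of $G$ and $B$ and all $A^u$ have no 3-blockades, then $|K\cap E(P)|\in\{1,2\}$ for every 3-blockade $K$ of $G$; (a3) for every $\Lambda$-difactor $\vec Q$ of $B$ there is a $\Lambda$-factor $P$ of $G$ with $\vec F(P,G)=\vec Q$.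
   Context: Graphs are finite and simple. A $\Lambda$-factor of a graph is a spanning subgraph each of whose components is a 3-vertex path; for a subgraph $H$, $G-H$ deletes the vertices of $H$. Graph-composition $G=B\{(A^u,a^u):u\in V(B)\}$: $B$ is cubic, each $a^u$ has degree 3 in $A^u$, $A_u=A^u-a^u$; fix for each $u$ a bijection between $N(a^u,A^u)$ and the three edges of $B$ at $u$; $G$ is the disjoint union of all $A_u$ together with, for each $uv\in E(B)$, one edge $\alpha(uv)$ joining the neighbour of $a^u$ corresponding to $uv$ with the neighbour of $a^v$ corresponding to $uv$. $E'(G)=\{\alpha(e):e\in E(B)\}$. For a $\Lambda$-factor $P$ of $G$, $\vec F(P,G)$ is the directed subgraph of $B$ consisting of edges $uv$ with $\alpha(uv)\in E(P)$, directed from $u$ to $v$ if the component $L$ of $P$ containing $\alpha(uv)$ satisfies $|V(L)\cap V(A_u)|=1$. For a $\Lambda$-factor $Q$ of $B$, the $\Lambda$-difactor $\vec Q$ is obtained by directing both edges of each path of $Q$ towards its center. A blockade of a cubic graph is an edge cut that is a matching; a 3-blockade is one with 3 edges. *)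

theory Defs
  imports Main
begin

type_synonym 'a graph = "'a set \<times> 'a set set"

definition verts :: "'a graph \<Rightarrow> 'a set" where "verts G = fst G"
definition edges :: "'a graph \<Rightarrow> 'a set set" where "edges G = snd G"

definition graph :: "'a graph \<Rightarrow> bool" where
  "graph G \<longleftrightarrow> finite (verts G) \<and>
     (\<forall>e\<in>edges G. \<exists>x y. x \<noteq> y \<and> x \<in> verts G \<and> y \<in> verts G \<and> e = {x, y})"

definition nbrs :: "'a graph \<Rightarrow> 'a \<Rightarrow> 'a set" where
  "nbrs G v = {w. {v, w} \<in> edges G}"

definition degree :: "'a graph \<Rightarrow> 'a \<Rightarrow> nat" where
  "degree G v = card {e \<in> edges G. v \<in> e}"

definition cubic :: "'a graph \<Rightarrow> bool" where
  "cubic G \<longleftrightarrow> graph G \<and> (\<forall>v\<in>verts G. degree G v = 3)"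

definition delete :: "'a graph \<Rightarrow> 'a set \<Rightarrow> 'a graph" where
  "delete G S = (verts G - S, {e \<in> edges G. e \<inter> S = {}})"

definition reach :: "'a graph \<Rightarrow> 'a \<Rightarrow> 'a \<Rightarrow> bool" where
  "reach G = (\<lambda>x y. {x, y} \<in> edges G)\<^sup>*\<^sup>*"

definition connected :: "'a graph \<Rightarrow> bool" where
  "connected G \<longleftrightarrow> verts G \<noteq> {} \<and> (\<forall>x\<in>verts G. \<forall>y\<in>verts G. reach G x y)"

definition three_connected :: "'a graph \<Rightarrow> bool" where
  "three_connected G \<longleftrightarrow> graph G \<and> card (verts G) \<ge> 4 \<and>
     (\<forall>S. S \<subseteq> verts G \<and> card S \<le> 2 \<longrightarrow> connected (delete G S))"

definition component :: "'a graph \<Rightarrow> 'a \<Rightarrow> 'a graph" where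
  "component G v = ({w. reach G v w}, {e \<in> edges G. e \<subseteq> {w. reach G v w}})"

definition is_P3 :: "'a graph \<Rightarrow> bool" where
  "is_P3 H \<longleftrightarrow> (\<exists>x y z. x \<noteq> y \<and> y \<noteq> z \<and> x \<noteq> z \<and>
      verts H = {x, y, z} \<and> edges H = {{x, y}, {y, z}})"

definition lambda_factor :: "'a graph \<Rightarrow> 'a graph \<Rightarrow> bool" where
  "lambda_factor G P \<longleftrightarrow> verts P = verts G \<and> edges P \<subseteq> edges G \<and>
     (\<forall>v\<in>verts P. is_P3 (component P v))"

definition has_lambda_factor :: "'a graph \<Rightarrow> bool" where
  "has_lambda_factor G \<longleftrightarrow> (\<exists>P. lambda_factor G P)"

text \<open>Lambda-difactor of a Lambda-factor Q: each edge directed towards the center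
  (the vertex of degree 2 in its path). Arcs are pairs (tail, head).\<close>
definition difactor :: "'a graph \<Rightarrow> ('a \<times> 'a) set" where
  "difactor Q = {(x, y). {x, y} \<in> edges Q \<and> degree Q y = 2}"

text \<open>B has vertices of type 'b; each A u has vertices of type 'a;
  the copies A_u = A u - a u are made disjoint by tagging with u.
  phi u is the bijection from the edges of B at u to the neighbours of a u in A u.\<close>
definition alpha :: "('b \<Rightarrow> 'b set \<Rightarrow> 'a) \<Rightarrow> 'b \<Rightarrow> 'b \<Rightarrow> ('b \<times> 'a) set" where
  "alpha phi u v = {(u, phi u {u, v}), (v, phi v {u, v})}"

definition VA :: "('b \<Rightarrow> 'a graph) \<Rightarrow> ('b \<Rightarrow> 'a) \<Rightarrow> 'b \<Rightarrow> ('b \<times> 'a) set" where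
  "VA A a u = {u} \<times> (verts (A u) - {a u})"

definition compose ::
  "'b graph \<Rightarrow> ('b \<Rightarrow> 'a graph) \<Rightarrow> ('b \<Rightarrow> 'a) \<Rightarrow> ('b \<Rightarrow> 'b set \<Rightarrow> 'a) \<Rightarrow> ('b \<times> 'a) graph" where
  "compose B A a phi =
     ((\<Union>u\<in>verts B. VA A a u),
      {{(u, x), (u, y)} | u x y. u \<in> verts B \<and> {x, y} \<in> edges (delete (A u) {a u})}
      \<union> {alpha phi u v | u v. {u, v} \<in> edges B})"

definition Eprime :: "'b graph \<Rightarrow> ('b \<Rightarrow> 'b set \<Rightarrow> 'a) \<Rightarrow> ('b \<times> 'a) set set" where
  "Eprime B phi = {alpha phi u v | u v. {u, v} \<in> edges B}"

definition alpha_preimage ::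
  "'b graph \<Rightarrow> ('b \<Rightarrow> 'b set \<Rightarrow> 'a) \<Rightarrow> ('b \<times> 'a) graph \<Rightarrow> 'b set set" where
  "alpha_preimage B phi P =
     {e \<in> edges B. \<exists>u v. e = {u, v} \<and> alpha phi u v \<in> edges P \<inter> Eprime B phi}"

definition Fvec ::
  "'b graph \<Rightarrow> ('b \<Rightarrow> 'a graph) \<Rightarrow> ('b \<Rightarrow> 'a) \<Rightarrow> ('b \<Rightarrow> 'b set \<Rightarrow> 'a) \<Rightarrow> ('b \<times> 'a) graph
     \<Rightarrow> ('b \<times> 'b) set" where
  "Fvec B A a phi P = {(u, v). {u, v} \<in> edges B \<and> alpha phi u v \<in> edges P \<and>
     card (verts (component P (u, phi u {u, v})) \<inter> VA A a u) = 1}"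

definition edge_cut :: "'a graph \<Rightarrow> 'a set set \<Rightarrow> bool" where
  "edge_cut G K \<longleftrightarrow> (\<exists>X. X \<subseteq> verts G \<and> X \<noteq> {} \<and> X \<noteq> verts G \<and>
     K = {e \<in> edges G. \<exists>x\<in>X. \<exists>y\<in>verts G - X. e = {x, y}})"

definition matching :: "'a set set \<Rightarrow> bool" where
  "matching K \<longleftrightarrow> (\<forall>e\<in>K. \<forall>f\<in>K. e \<noteq> f \<longrightarrow> e \<inter> f = {})"

definition three_blockade :: "'a graph \<Rightarrow> 'a set set \<Rightarrow> bool" where
  "three_blockade G K \<longleftrightarrow> edge_cut G K \<and> matching K \<and> card K = 3"

end

theory Submission
  imports Defs
begin

(* G = B{(A^u, a^u)} replaces every vertex u of the cubic graph B by the block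
   A_u = A^u - a^u, attaching the three edges of B at u to the three neighbours
   ("ports") of a^u.  The proof rests on a local description of Lambda-factors:
   a spanning subgraph is a Lambda-factor iff every vertex has one or two
   neighbours and every edge joins a centre (two neighbours) to a leaf.

   (a1) Counting edge-ends inside a block modulo 3 (v(A^u) = 2 mod 6) leaves three
        patterns for the used alpha-edges at u; hypothesis (h1) excludes the third,
        so u is a leaf (one used alpha-edge, leaf port) or a centre (two used
        alpha-edges, centre ports).  Hence the used alpha-edges form a Lambda-factor
        Q of B and F(P, G) points to the centres of Q.
   (a3) Conversely, local patterns in every block, supplied by (h2) at leaves and
        (h3) at centres of Q, glue with the alpha-edges of Q to a Lambda-factor.
   (a2) A 3-blockade of G splitting a block yields a 3-blockade of A^u; otherwise it
        is the alpha-image of a 3-edge cut of B, hence of a star, and a star meets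
        a Lambda-factor in one or two edges by (a1). *)

lemma graph_edge: "graph H \<Longrightarrow> {x, y} \<in> edges H \<Longrightarrow> x \<noteq> y \<and> x \<in> verts H \<and> y \<in> verts H"
  unfolding graph_def by (metis doubleton_eq_iff)

lemma graph_edgeE:
  assumes "graph H" "e \<in> edges H"
  obtains x y where "x \<noteq> y" "x \<in> verts H" "y \<in> verts H" "e = {x, y}"
  using assms unfolding graph_def by metis

lemma finite_edges: "graph H \<Longrightarrow> finite (edges H)"
proof -
  assume g: "graph H"
  have "edges H \<subseteq> Pow (verts H)"
    using g by (auto elim!: graph_edgeE)
  moreover have "finite (Pow (verts H))" using g unfolding graph_def by simp
  ultimately show ?thesis by (rule finite_subset)
qed

lemma graph_delete: "graph H \<Longrightarrow> graph (delete H S)"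
  unfolding graph_def delete_def verts_def edges_def by fastforce

lemma nbrs_subset: "graph H \<Longrightarrow> nbrs H v \<subseteq> verts H"
  unfolding nbrs_def using graph_edge by fastforce

lemma finite_nbrs: "graph H \<Longrightarrow> finite (nbrs H v)"
  using nbrs_subset finite_subset unfolding graph_def by metis

lemma nbrs_sym: "w \<in> nbrs H v \<longleftrightarrow> v \<in> nbrs H w"
  unfolding nbrs_def by (simp add: insert_commute)

lemma nbrs_irrefl: "graph H \<Longrightarrow> v \<notin> nbrs H v"
  unfolding nbrs_def using graph_edge by fastforce

lemma nbrs_outside: "graph H \<Longrightarrow> x \<notin> verts H \<Longrightarrow> nbrs H x = {}"
  unfolding nbrs_def using graph_edge by fastforce

definition star :: "'a graph \<Rightarrow> 'a \<Rightarrow> 'a set set" where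
  "star H w = {e \<in> edges H. w \<in> e}"

lemma finite_star: "graph H \<Longrightarrow> finite (star H w)"
  using finite_edges[of H] by (simp add: star_def)

lemma star_nbrs: "graph H \<Longrightarrow> star H v = (\<lambda>w. {v, w}) ` nbrs H v"
  unfolding star_def nbrs_def
proof (rule set_eqI, rule iffI)
  fix e assume g: "graph H" and "e \<in> {e \<in> edges H. v \<in> e}"
  then have e: "e \<in> edges H" "v \<in> e" by auto
  obtain x y where "e = {x, y}" using graph_edgeE[OF g e(1)] by metis
  then have "e = {v, if x = v then y else x}" using e(2) by auto
  then show "e \<in> (\<lambda>w. {v, w}) ` {w. {v, w} \<in> edges H}" using e(1) by auto
qed auto

lemma degree_nbrs: "graph H \<Longrightarrow> degree H v = card (nbrs H v)"
proof -
  assume g: "graph H"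
  have "inj_on (\<lambda>w. {v, w}) (nbrs H v)"
    by (rule inj_onI) (metis doubleton_eq_iff)
  then show ?thesis using star_nbrs[OF g, of v] card_image
    unfolding degree_def star_def by metis
qed

lemma nbrs_single: "card (nbrs H p) = 1 \<Longrightarrow> q \<in> nbrs H p \<Longrightarrow> nbrs H p = {q}"
  by (metis card_1_singletonE singletonD)

lemma nbrs_pair:
  assumes "card (nbrs H p) = 2" "q \<in> nbrs H p"
  obtains r where "r \<noteq> q" "nbrs H p = {q, r}"
proof -
  obtain x z where "x \<noteq> z" "nbrs H p = {x, z}" using assms(1) by (metis card_2_iff)
  then show ?thesis using that assms(2) by (metis doubleton_eq_iff insertE singletonD)
qed

lemma reach_sym: "reach H x y \<Longrightarrow> reach H y x"
proof -
  have "symp (\<lambda>x y. {x, y} \<in> edges H)" by (rule sympI) (simp add: insert_commute)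
  then show "reach H x y \<Longrightarrow> reach H y x" unfolding reach_def
    by (meson sympD symp_rtranclp)
qed

lemma reach_edge: "{x, y} \<in> edges H \<Longrightarrow> reach H x y"
  unfolding reach_def by auto

lemma reach_trans: "reach H x y \<Longrightarrow> reach H y z \<Longrightarrow> reach H x z"
  unfolding reach_def by auto

lemma reach_closed:
  assumes "reach H v w" "v \<in> S" "\<And>x y. x \<in> S \<Longrightarrow> {x, y} \<in> edges H \<Longrightarrow> y \<in> S"
  shows "w \<in> S"
  using assms(1) unfolding reach_def
  by (induction rule: rtranclp_induct) (use assms in auto)

lemma component_verts: "verts (component P v) = {w. reach P v w}"
  by (simp add: component_def verts_def)

lemma component_edges: "edges (component P v) = {e \<in> edges P. e \<subseteq> verts (component P v)}"
  by (simp add: component_def edges_def verts_def)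

lemma nbrs_component:
  assumes "reach P v u"
  shows "nbrs P u = nbrs (component P v) u"
proof (rule set_eqI, rule iffI)
  fix w assume "w \<in> nbrs P u"
  then have e: "{u, w} \<in> edges P" by (simp add: nbrs_def)
  then have "reach P v w" using assms reach_edge reach_trans by metis
  then show "w \<in> nbrs (component P v) u"
    using e assms by (auto simp: nbrs_def component_def edges_def)
qed (auto simp: nbrs_def component_def edges_def)

section \<open>A local characterisation of \<open>\<Lambda>\<close>-factors\<close>

text \<open>For simple graphs this is
  equivalent to all components being 3-vertex paths, and it is the form in which
  \<open>\<Lambda>\<close>-factors are built and taken apart below.\<close>
definition lambda_shaped :: "'a graph \<Rightarrow> bool" where
  "lambda_shaped P \<longleftrightarrow> (\<forall>v\<in>verts P. card (nbrs P v) = 1 \<or> card (nbrs P v) = 2) \<and>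
     (\<forall>v w. {v, w} \<in> edges P \<longrightarrow> (card (nbrs P v) = 2) = (card (nbrs P w) \<noteq> 2))"

lemma lambda_shaped_vertex:
  "lambda_shaped P \<Longrightarrow> p \<in> verts P \<Longrightarrow> card (nbrs P p) = 1 \<or> card (nbrs P p) = 2"
  unfolding lambda_shaped_def by blast

lemma lambda_shaped_edge:
  "lambda_shaped P \<Longrightarrow> {p, q} \<in> edges P \<Longrightarrow> (card (nbrs P p) = 2) = (card (nbrs P q) \<noteq> 2)"
  unfolding lambda_shaped_def by blast

lemma component_of_centre:
  assumes g: "graph P" and l: "lambda_shaped P" and c: "card (nbrs P c) = 2"
  shows "verts (component P c) = insert c (nbrs P c)"
proof -
  have "{w. reach P c w} \<subseteq> insert c (nbrs P c)"
  proof
    fix w assume "w \<in> {w. reach P c w}"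
    then have r: "reach P c w" by simp
    show "w \<in> insert c (nbrs P c)"
    proof (rule reach_closed[OF r])
      fix x y assume x: "x \<in> insert c (nbrs P c)" and e: "{x, y} \<in> edges P"
      show "y \<in> insert c (nbrs P c)"
      proof (cases "x = c")
        case True then show ?thesis using e by (simp add: nbrs_def)
      next
        case False
        then have ce: "{c, x} \<in> edges P" using x by (simp add: nbrs_def)
        have "card (nbrs P x) = 1"
          using lambda_shaped_edge[OF l ce] lambda_shaped_vertex[OF l] graph_edge[OF g ce] c by auto
        moreover have "c \<in> nbrs P x" "y \<in> nbrs P x" using ce e by (simp_all add: nbrs_def insert_commute)
        ultimately have "y = c" using nbrs_single by fastforce
        then show ?thesis by simp
      qed
    qed simp
  qed
  moreover have "insert c (nbrs P c) \<subseteq> {w. reach P c w}"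
    by (auto simp: reach_def nbrs_def)
  ultimately show ?thesis unfolding component_verts by (rule subset_antisym)
qed

lemma component_of_leaf:
  assumes g: "graph P" and l: "lambda_shaped P" and v: "card (nbrs P v) = 1" and c: "c \<in> nbrs P v"
  shows "card (nbrs P c) = 2 \<and> verts (component P v) = insert c (nbrs P c)"
proof -
  have e: "{v, c} \<in> edges P" using c by (simp add: nbrs_def)
  then have c2: "card (nbrs P c) = 2" using lambda_shaped_edge[OF l e] v by simp
  have "{w. reach P v w} = {w. reach P c w}"
    by (meson reach_edge[OF e] reach_sym reach_trans)
  then show ?thesis using component_of_centre[OF g l c2] c2 by (simp add: component_verts)
qed

lemma lambda_shaped_P3:
  assumes g: "graph P" and l: "lambda_shaped P" and v: "v \<in> verts P"
  shows "is_P3 (component P v)"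
proof -
  obtain c where c2: "card (nbrs P c) = 2" and cv: "verts (component P v) = insert c (nbrs P c)"
  proof (cases "card (nbrs P v) = 2")
    case True then show ?thesis using that component_of_centre[OF g l True] by blast
  next
    case False
    then have v1: "card (nbrs P v) = 1" using lambda_shaped_vertex[OF l v] by blast
    then obtain c where "nbrs P v = {c}" by (metis card_1_singletonE)
    then show ?thesis using that component_of_leaf[OF g l v1] by blast
  qed
  obtain x z where xz: "x \<noteq> z" "nbrs P c = {x, z}" using c2 by (metis card_2_iff)
  have cx: "c \<noteq> x" "c \<noteq> z" using nbrs_irrefl[OF g, of c] xz by blast+
  have ex: "{c, x} \<in> edges P" "{c, z} \<in> edges P" using xz by (auto simp: nbrs_def)
  have leaf: "nbrs P p = {c}" if "p \<in> {x, z}" for p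
  proof -
    have e: "{c, p} \<in> edges P" using that ex by auto
    have "card (nbrs P p) = 1"
      using lambda_shaped_edge[OF l e] lambda_shaped_vertex[OF l] graph_edge[OF g e] c2 by auto
    moreover have "c \<in> nbrs P p" using e by (simp add: nbrs_def insert_commute)
    ultimately show ?thesis by (rule nbrs_single)
  qed
  have E: "edges (component P v) = {{x, c}, {c, z}}"
  proof (rule set_eqI, rule iffI)
    fix e assume e: "e \<in> edges (component P v)"
    then have eP: "e \<in> edges P" and esub: "e \<subseteq> {c, x, z}"
      using component_edges[of P v] cv xz by auto
    obtain p q where pq: "p \<noteq> q" "e = {p, q}" using graph_edgeE[OF g eP] by metis
    show "e \<in> {{x, c}, {c, z}}"
    proof (cases "c \<in> e")
      case True
      then show ?thesis using pq esub by (auto simp: insert_commute)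
    next
      case False
      then have "e = {x, z}" using pq esub by auto
      then have "z \<in> nbrs P x" using eP by (simp add: nbrs_def)
      then show ?thesis using leaf[of x] cx by simp
    qed
  next
    fix e assume "e \<in> {{x, c}, {c, z}}"
    then show "e \<in> edges (component P v)"
      using ex component_edges[of P v] cv xz by (auto simp: insert_commute)
  qed
  have "x \<noteq> c \<and> c \<noteq> z \<and> x \<noteq> z \<and> verts (component P v) = {x, c, z} \<and>
      edges (component P v) = {{x, c}, {c, z}}"
    using cv xz E cx by auto
  then show ?thesis unfolding is_P3_def by blast
qed

lemma P3_nbrs:
  assumes "x \<noteq> y" "y \<noteq> z" "x \<noteq> z" "verts H = {x, y, z}" "edges H = {{x, y}, {y, z}}"
  shows "nbrs H x = {y}" "nbrs H y = {x, z}" "nbrs H z = {y}"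
  using assms by (auto simp: nbrs_def doubleton_eq_iff)

lemma P3_components_lambda_shaped:
  assumes g: "graph P" and h: "\<forall>v\<in>verts P. is_P3 (component P v)"
  shows "lambda_shaped P"
proof -
  have key: "(card (nbrs P u) = 1 \<or> card (nbrs P u) = 2) \<and>
     (\<forall>w. {u, w} \<in> edges P \<longrightarrow> (card (nbrs P u) = 2) = (card (nbrs P w) \<noteq> 2))"
    if u: "u \<in> verts P" for u
  proof -
    obtain x y z where p: "x \<noteq> y" "y \<noteq> z" "x \<noteq> z"
      "verts (component P u) = {x, y, z}" "edges (component P u) = {{x, y}, {y, z}}"
      using h u unfolding is_P3_def by metis
    have cnt: "card (nbrs P q) = (if q = y then 2 else 1)" if "q \<in> {x, y, z}" for q
    proof -
      have "reach P u q" using that p(4) component_verts[of P u] by auto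
      then have "nbrs P q = nbrs (component P u) q" by (rule nbrs_component)
      then show ?thesis using that P3_nbrs[OF p] p by auto
    qed
    have uin: "u \<in> {x, y, z}" using p(4) component_verts[of P u] by (auto simp: reach_def)
    show ?thesis
    proof (intro conjI allI impI)
      show "card (nbrs P u) = 1 \<or> card (nbrs P u) = 2" using cnt[OF uin] by auto
    next
      fix w assume e: "{u, w} \<in> edges P"
      have "{u, w} \<subseteq> verts (component P u)"
        using reach_edge[OF e] component_verts[of P u] by (auto simp: reach_def)
      then have "{u, w} \<in> edges (component P u)" using e component_edges[of P u] by auto
      then have "{u, w} = {x, y} \<or> {u, w} = {y, z}" using p(5) by auto
      moreover have "w \<in> {x, y, z}" using \<open>{u, w} \<subseteq> _\<close> p(4) by auto
      ultimately have "(u = y) = (w \<noteq> y)" using p by (auto simp: doubleton_eq_iff)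
      then show "(card (nbrs P u) = 2) = (card (nbrs P w) \<noteq> 2)"
        using cnt[OF uin] cnt[OF \<open>w \<in> {x, y, z}\<close>] by simp
    qed
  qed
  show ?thesis unfolding lambda_shaped_def
  proof (intro conjI ballI allI impI)
    fix v assume "v \<in> verts P"
    then show "card (nbrs P v) = 1 \<or> card (nbrs P v) = 2" using key by blast
  next
    fix v w assume e: "{v, w} \<in> edges P"
    then have "v \<in> verts P" using graph_edge[OF g] by blast
    then show "(card (nbrs P v) = 2) = (card (nbrs P w) \<noteq> 2)" using key e by blast
  qed
qed

lemma spanning_subgraph_graph:
  assumes g: "graph G" and v: "verts P = verts G" and e: "edges P \<subseteq> edges G"
  shows "graph P"
  unfolding graph_def v
proof (intro conjI ballI)
  show "finite (verts G)" using g by (simp add: graph_def)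
next
  fix d assume "d \<in> edges P"
  then have "d \<in> edges G" using e by blast
  then show "\<exists>x y. x \<noteq> y \<and> x \<in> verts G \<and> y \<in> verts G \<and> d = {x, y}"
    using g unfolding graph_def by blast
qed

lemma lambda_factor_iff:
  assumes g: "graph G"
  shows "lambda_factor G P \<longleftrightarrow> verts P = verts G \<and> edges P \<subseteq> edges G \<and> lambda_shaped P"
proof (cases "verts P = verts G \<and> edges P \<subseteq> edges G")
  case True
  then have "graph P" using spanning_subgraph_graph[OF g] by (elim conjE)
  then have "(\<forall>v\<in>verts P. is_P3 (component P v)) \<longleftrightarrow> lambda_shaped P"
    using lambda_shaped_P3 P3_components_lambda_shaped by metis
  then show ?thesis using True unfolding lambda_factor_def by simp
next
  case False
  then show ?thesis unfolding lambda_factor_def by blast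
qed

lemma lambda_factorD:
  assumes g: "graph G" and P: "lambda_factor G P"
  shows "verts P = verts G" "edges P \<subseteq> edges G" "lambda_shaped P" "graph P"
proof -
  have "verts P = verts G \<and> edges P \<subseteq> edges G \<and> lambda_shaped P"
    using P lambda_factor_iff[OF g] by simp
  then show v: "verts P = verts G" and e: "edges P \<subseteq> edges G" and "lambda_shaped P"
    by simp_all
  show "graph P" by (rule spanning_subgraph_graph[OF g v e])
qed

definition boundary :: "'a graph \<Rightarrow> 'a set \<Rightarrow> nat \<Rightarrow> ('a \<times> 'a) set" where
  "boundary P C k = (SIGMA q:{q \<in> C. card (nbrs P q) = k}. nbrs P q - C)"

text \<open>Counting edge-ends inside a vertex set \<open>C\<close> of a \<open>\<Lambda>\<close>-shaped graph: centres carry two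
  ends, leaves one, and every edge inside \<open>C\<close> joins a centre to a leaf.\<close>
lemma lambda_shaped_block_count:
  assumes g: "graph P" and l: "lambda_shaped P" and C: "C \<subseteq> verts P"
  shows "(card (boundary P C 2) + 2 * card (boundary P C 1)) mod 3 = (2 * card C) mod 3"
proof -
  define Ct where "Ct = {p \<in> C. card (nbrs P p) = 2}"
  define Lf where "Lf = {p \<in> C. card (nbrs P p) = 1}"
  have finC: "finite C" using C g finite_subset unfolding graph_def by blast
  then have fin: "finite Ct" "finite Lf" by (simp_all add: Ct_def Lf_def)
  have "C = Ct \<union> Lf" using lambda_shaped_vertex[OF l] C by (auto simp: Ct_def Lf_def)
  moreover have "Ct \<inter> Lf = {}" by (auto simp: Ct_def Lf_def)
  ultimately have cC: "card C = card Ct + card Lf" using fin card_Un_disjoint by metis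
  text \<open>Centre-to-leaf adjacencies inside \<open>C\<close>, counted from either end.\<close>
  define S1 where "S1 = (SIGMA q:Ct. nbrs P q \<inter> C)"
  define S2 where "S2 = (SIGMA p:Lf. nbrs P p \<inter> C)"
  have centre_nbr: "card (nbrs P q) = 1" if "card (nbrs P p) = 2" "q \<in> nbrs P p" for p q
  proof -
    have e: "{p, q} \<in> edges P" using that by (simp add: nbrs_def)
    then show ?thesis
      using lambda_shaped_edge[OF l e] lambda_shaped_vertex[OF l] graph_edge[OF g e] that(1) by auto
  qed
  have leaf_nbr: "card (nbrs P q) = 2" if "card (nbrs P p) = 1" "q \<in> nbrs P p" for p q
  proof -
    have e: "{p, q} \<in> edges P" using that by (simp add: nbrs_def)
    then show ?thesis using lambda_shaped_edge[OF l e] that(1) by simp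
  qed
  have "bij_betw (\<lambda>(q, p). (p, q)) S1 S2"
    by (rule bij_betw_byWitness[where f' = "\<lambda>(p, q). (q, p)"])
       (auto simp: S1_def S2_def Ct_def Lf_def nbrs_sym[of _ P]
         intro: centre_nbr[unfolded One_nat_def] leaf_nbr)
  then have S12: "card S1 = card S2" by (rule bij_betw_same_card)
  have split: "card (nbrs P q) = card (nbrs P q \<inter> C) + card (nbrs P q - C)" for q
    using finite_nbrs[OF g] by (metis card_Int_Diff)
  have "2 * card Ct = (\<Sum>q\<in>Ct. card (nbrs P q))" by (simp add: Ct_def)
  also have "\<dots> = (\<Sum>q\<in>Ct. card (nbrs P q \<inter> C)) + (\<Sum>q\<in>Ct. card (nbrs P q - C))"
    by (simp add: split sum.distrib)
  also have "\<dots> = card S1 + card (boundary P C 2)"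
    using fin finite_nbrs[OF g] by (simp add: S1_def boundary_def Ct_def)
  finally have e1: "2 * card Ct = card S1 + card (boundary P C 2)" .
  have "card Lf = (\<Sum>q\<in>Lf. card (nbrs P q))" by (simp add: Lf_def)
  also have "\<dots> = (\<Sum>q\<in>Lf. card (nbrs P q \<inter> C)) + (\<Sum>q\<in>Lf. card (nbrs P q - C))"
    by (simp add: split sum.distrib)
  also have "\<dots> = card S2 + card (boundary P C 1)"
    using fin finite_nbrs[OF g] by (simp add: S2_def boundary_def Lf_def)
  finally have e2: "card Lf = card S1 + card (boundary P C 1)" using S12 by simp
  have "2 * card C = 3 * card S1 + (card (boundary P C 2) + 2 * card (boundary P C 1))"
    using cC e1 e2 by simp
  then show ?thesis by simp
qed

definition pullback :: "('c \<Rightarrow> 'a) \<Rightarrow> 'c set \<Rightarrow> 'a graph \<Rightarrow> 'c graph" where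
  "pullback g W P = (W, {{y, z} | y z. {g y, g z} \<in> edges P \<and> y \<in> W \<and> z \<in> W})"

lemma pullback_edge:
  "{y, z} \<in> edges (pullback g W P) \<longleftrightarrow> {g y, g z} \<in> edges P \<and> y \<in> W \<and> z \<in> W"
proof
  assume "{y, z} \<in> edges (pullback g W P)"
  then obtain y' z' where h: "{y, z} = {y', z'}" "{g y', g z'} \<in> edges P" "y' \<in> W" "z' \<in> W"
    by (auto simp: pullback_def edges_def)
  then have "(y = y' \<and> z = z') \<or> (y = z' \<and> z = y')" by (simp add: doubleton_eq_iff)
  then show "{g y, g z} \<in> edges P \<and> y \<in> W \<and> z \<in> W" using h by (auto simp: insert_commute)
qed (auto simp: pullback_def edges_def)

text \<open>If \<open>g\<close> is injective on \<open>W\<close> and the \<open>P\<close>-neighbours of \<open>g ` W\<close> stay inside \<open>g ` W\<close>,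
  the pullback of a \<open>\<Lambda>\<close>-shaped graph is \<open>\<Lambda>\<close>-shaped: \<open>g\<close> preserves all neighbour counts.\<close>
lemma lambda_shaped_pullback:
  assumes l: "lambda_shaped P" and inj: "inj_on g W" and gW: "g ` W \<subseteq> verts P"
    and closed: "\<And>y. y \<in> W \<Longrightarrow> nbrs P (g y) \<subseteq> g ` W"
  shows "lambda_shaped (pullback g W P)"
proof -
  have nb: "card (nbrs (pullback g W P) y) = card (nbrs P (g y))" if y: "y \<in> W" for y
  proof -
    have "nbrs P (g y) = g ` nbrs (pullback g W P) y"
      using closed[OF y] y by (auto simp: nbrs_def pullback_edge)
    moreover have "nbrs (pullback g W P) y \<subseteq> W" by (auto simp: nbrs_def pullback_edge)
    ultimately show ?thesis using inj_on_subset[OF inj] card_image by metis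
  qed
  show ?thesis unfolding lambda_shaped_def
  proof (intro conjI ballI allI impI)
    fix y assume "y \<in> verts (pullback g W P)"
    then have y: "y \<in> W" by (simp add: pullback_def verts_def)
    then show "card (nbrs (pullback g W P) y) = 1 \<or> card (nbrs (pullback g W P) y) = 2"
      using lambda_shaped_vertex[OF l] gW nb by auto
  next
    fix y z assume "{y, z} \<in> edges (pullback g W P)"
    then have "{g y, g z} \<in> edges P" "y \<in> W" "z \<in> W" by (simp_all add: pullback_edge)
    then show "(card (nbrs (pullback g W P) y) = 2) = (card (nbrs (pullback g W P) z) \<noteq> 2)"
      using lambda_shaped_edge[OF l] nb by simp
  qed
qed

section \<open>Edge cuts in cubic 3-connected graphs\<close>

definition cut_edges :: "'a graph \<Rightarrow> 'a set \<Rightarrow> 'a set set" where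
  "cut_edges H U = {e \<in> edges H. \<exists>x\<in>U. \<exists>y\<in>verts H - U. e = {x, y}}"

lemma cut_subset: "cut_edges H U \<subseteq> edges H"
  by (auto simp: cut_edges_def)

lemma finite_cut: "graph H \<Longrightarrow> finite (cut_edges H U)"
  using finite_subset[OF cut_subset finite_edges] .

lemma edge_cut_iff: "edge_cut H K \<longleftrightarrow> (\<exists>U. U \<subseteq> verts H \<and> U \<noteq> {} \<and> U \<noteq> verts H \<and> K = cut_edges H U)"
  by (simp add: edge_cut_def cut_edges_def)

lemma cut_mem:
  assumes g: "graph H" and e: "{p, q} \<in> edges H"
  shows "{p, q} \<in> cut_edges H U \<longleftrightarrow> (p \<in> U \<longleftrightarrow> q \<notin> U)"
proof -
  have pq: "p \<noteq> q" "p \<in> verts H" "q \<in> verts H" using graph_edge[OF g e] by auto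
  show ?thesis
  proof
    assume "{p, q} \<in> cut_edges H U"
    then obtain x y where "x \<in> U" "y \<notin> U" "{p, q} = {x, y}" by (auto simp: cut_edges_def)
    then show "p \<in> U \<longleftrightarrow> q \<notin> U" by (auto simp: doubleton_eq_iff)
  next
    assume h: "p \<in> U \<longleftrightarrow> q \<notin> U"
    show "{p, q} \<in> cut_edges H U"
    proof (cases "p \<in> U")
      case True
      then show ?thesis unfolding cut_edges_def using e pq h
        by (intro CollectI conjI bexI[of _ p] bexI[of _ q]) auto
    next
      case False
      then show ?thesis unfolding cut_edges_def using e pq h
        by (intro CollectI conjI bexI[of _ q] bexI[of _ p]) (auto simp: insert_commute)
    qed
  qed
qed

lemma cut_complement:
  assumes g: "graph H"
  shows "cut_edges H (verts H - U) = cut_edges H U"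
proof (rule set_eqI)
  fix e
  show "e \<in> cut_edges H (verts H - U) \<longleftrightarrow> e \<in> cut_edges H U"
  proof (cases "e \<in> edges H")
    case True
    then obtain p q where "e = {p, q}" "p \<in> verts H" "q \<in> verts H" using graph_edgeE[OF g] by metis
    then show ?thesis using cut_mem[OF g] True by auto
  qed (use cut_subset in blast)
qed

lemma cut_single:
  assumes g: "graph H"
  shows "cut_edges H {w} = star H w"
proof (rule set_eqI)
  fix e
  show "e \<in> cut_edges H {w} \<longleftrightarrow> e \<in> star H w"
  proof (cases "e \<in> edges H")
    case True
    then obtain p q where "e = {p, q}" "p \<noteq> q" using graph_edgeE[OF g] by metis
    then show ?thesis using cut_mem[OF g] True by (auto simp: star_def)
  qed (auto simp: cut_edges_def star_def)
qed

lemma cut_insert: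
  assumes g: "graph H" and w: "w \<notin> U"
  shows "cut_edges H (insert w U) = (cut_edges H U - star H w) \<union> (star H w - cut_edges H U)"
proof (rule set_eqI)
  fix e
  show "e \<in> cut_edges H (insert w U) \<longleftrightarrow> e \<in> (cut_edges H U - star H w) \<union> (star H w - cut_edges H U)"
  proof (cases "e \<in> edges H")
    case True
    obtain p q where pq: "e = {p, q}" "p \<noteq> q" using graph_edgeE[OF g True] by metis
    show ?thesis using cut_mem[OF g, of p q] True pq w by (auto simp: star_def)
  qed (use cut_subset[of H] in \<open>auto simp: star_def\<close>)
qed

lemma card_cut_insert:
  assumes g: "graph H" and w: "w \<notin> U" and d: "card (star H w) = 3"
  shows "card (cut_edges H U) + card (cut_edges H (insert w U)) = 2 * card (cut_edges H U - star H w) + 3"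
proof -
  have f1: "finite (cut_edges H U)" "finite (star H w)" using finite_cut[OF g] finite_star[OF g] .
  have "card (cut_edges H (insert w U)) = card (cut_edges H U - star H w) + card (star H w - cut_edges H U)"
    unfolding cut_insert[OF g w] by (rule card_Un_disjoint) (use f1 in auto)
  moreover have "card (cut_edges H U) = card (cut_edges H U \<inter> star H w) + card (cut_edges H U - star H w)"
    by (rule card_Int_Diff[OF f1(1)])
  moreover have "card (star H w) = card (star H w \<inter> cut_edges H U) + card (star H w - cut_edges H U)"
    by (rule card_Int_Diff[OF f1(2)])
  moreover have "star H w \<inter> cut_edges H U = cut_edges H U \<inter> star H w" by blast
  ultimately show ?thesis using d by simp
qed

lemma cubic_star: "cubic H \<Longrightarrow> w \<in> verts H \<Longrightarrow> card (star H w) = 3"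
  by (simp add: cubic_def degree_def star_def)

text \<open>In a 3-connected graph an edge cut with a side of at least three vertices has at least
  three edges: otherwise the ends of the cut edges on that side would separate it.\<close>
lemma three_connected_cut_ge3:
  assumes t: "three_connected H" and U: "U \<subseteq> verts H" "card U \<ge> 3" "U \<noteq> verts H"
  shows "card (cut_edges H U) \<ge> 3"
proof (rule ccontr)
  assume less: "\<not> card (cut_edges H U) \<ge> 3"
  have g: "graph H" using t by (simp add: three_connected_def)
  have fU: "finite U" using finite_subset[OF U(1)] g by (simp add: graph_def)
  define S where "S = (\<Union>e\<in>cut_edges H U. e \<inter> U)"
  have one: "card (e \<inter> U) = 1" if ec: "e \<in> cut_edges H U" for e
  proof -
    obtain x y where "x \<in> U" "y \<notin> U" "e = {x, y}" using ec unfolding cut_edges_def by blast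
    then have "e \<inter> U = {x}" by auto
    then show ?thesis by simp
  qed
  have "card S \<le> (\<Sum>e\<in>cut_edges H U. card (e \<inter> U))"
    unfolding S_def by (rule card_UN_le[OF finite_cut[OF g]])
  also have "\<dots> = card (cut_edges H U)" using one by simp
  finally have cS: "card S \<le> 2" using less by simp
  have SU: "S \<subseteq> U" by (auto simp: S_def)
  have conn: "connected (delete H S)" using t SU U(1) cS by (simp add: three_connected_def)
  have "U - S \<noteq> {}"
  proof
    assume "U - S = {}"
    then have "card U \<le> card S" using finite_subset[OF SU fU] by (simp add: card_mono)
    then show False using U(2) cS by simp
  qed
  then obtain x where x: "x \<in> U" "x \<notin> S" by blast
  obtain y where y: "y \<in> verts H" "y \<notin> U" using U by blast
  have "x \<in> verts (delete H S)" "y \<in> verts (delete H S)"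
    using x y U(1) SU by (auto simp: delete_def verts_def)
  then have "reach (delete H S) x y" using conn by (simp add: connected_def)
  then have "y \<in> U - S"
  proof (rule reach_closed)
    fix p q assume p: "p \<in> U - S" and e: "{p, q} \<in> edges (delete H S)"
    then have eH: "{p, q} \<in> edges H" and qS: "q \<notin> S" by (auto simp: delete_def edges_def)
    show "q \<in> U - S"
    proof (rule ccontr)
      assume "q \<notin> U - S"
      then have "{p, q} \<in> cut_edges H U" using cut_mem[OF g eH] p qS by blast
      then show False using p unfolding S_def by blast
    qed
  qed (use x in blast)
  then show False using y by blast
qed

text \<open>In a cubic 3-connected graph every nontrivial edge cut has at least three edges; sides
  of one or two vertices are handled by counting with \<open>card_cut_insert\<close>.\<close>
lemma cubic_cut_ge3:
  assumes c: "cubic H" and t: "three_connected H" and U: "U \<subseteq> verts H" "U \<noteq> {}" "U \<noteq> verts H"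
  shows "card (cut_edges H U) \<ge> 3"
proof (cases "card U \<ge> 3")
  case True
  then show ?thesis using three_connected_cut_ge3[OF t U(1) _ U(3)] by blast
next
  case False
  have g: "graph H" using c by (simp add: cubic_def)
  have single: "card (cut_edges H {x}) = 3" if "x \<in> verts H" for x
    using cut_single[OF g] cubic_star[OF c that] by simp
  have "finite U" using finite_subset[OF U(1)] g by (simp add: graph_def)
  then have "card U \<noteq> 0" using U(2) by simp
  then consider "card U = 1" | "card U = 2" using False by linarith
  then show ?thesis
  proof cases
    case 1
    then obtain x where "U = {x}" by (metis card_1_singletonE)
    then show ?thesis using single U(1) by auto
  next
    case 2
    then obtain x z where xz: "x \<noteq> z" "U = {x, z}" by (metis card_2_iff)
    have xv: "x \<in> verts H" "z \<in> verts H" using U(1) xz by auto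
    have T: "card (cut_edges H {x}) + card (cut_edges H (insert z {x})) = 2 * card (cut_edges H {x} - star H z) + 3"
      using card_cut_insert[OF g _ cubic_star[OF c xv(2)]] xz by simp
    have "star H x - {{x, z}} \<subseteq> cut_edges H {x} - star H z"
    proof
      fix e assume e: "e \<in> star H x - {{x, z}}"
      then have eE: "e \<in> edges H" "x \<in> e" "e \<noteq> {x, z}" by (auto simp: star_def)
      obtain p q where "e = {p, q}" using graph_edgeE[OF g eE(1)] by metis
      then have "z \<notin> e" using eE xz(1) by auto
      then show "e \<in> cut_edges H {x} - star H z" using e cut_single[OF g, of x] by (simp add: star_def)
    qed
    then have "card (star H x - {{x, z}}) \<le> card (cut_edges H {x} - star H z)"
      using finite_cut[OF g] by (metis card_mono finite_Diff)
    moreover have "card (star H x - {{x, z}}) \<ge> 2"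
      using finite_star[OF g] cubic_star[OF c xv(1)] by (simp add: card_Diff_singleton_if)
    ultimately show ?thesis using T single[OF xv(1)] xz by (simp add: insert_commute)
  qed
qed

text \<open>A 3-edge cut of a cubic 3-connected graph that is not a matching is the star of a
  vertex: two cut edges meeting at \<open>w\<close> force the side containing \<open>w\<close> (or its complement)
  to be \<open>{w}\<close>, by \<open>card_cut_insert\<close> and \<open>cubic_cut_ge3\<close>.\<close>
lemma cubic_three_cut_star:
  assumes c: "cubic H" and t: "three_connected H"
    and U: "U \<subseteq> verts H" "U \<noteq> {}" "U \<noteq> verts H"
    and c3: "card (cut_edges H U) = 3" and nm: "\<not> matching (cut_edges H U)"
  shows "\<exists>w\<in>verts H. cut_edges H U = star H w"
proof -
  have g: "graph H" using c by (simp add: cubic_def)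
  obtain e f w where ef: "e \<in> cut_edges H U" "f \<in> cut_edges H U" "e \<noteq> f" "w \<in> e" "w \<in> f"
    using nm unfolding matching_def by blast
  have eE: "e \<in> edges H" "f \<in> edges H" using ef cut_subset by blast+
  have wV: "w \<in> verts H" using graph_edgeE[OF g eE(1)] ef(4) by blast
  have "cut_edges H U - star H w \<subseteq> cut_edges H U - {e, f}" using ef eE by (auto simp: star_def)
  then have "card (cut_edges H U - star H w) \<le> card (cut_edges H U - {e, f})"
    using finite_cut[OF g] by (simp add: card_mono)
  also have "\<dots> = 1" using c3 ef finite_cut[OF g] by (simp add: card_Diff_subset)
  finally have cs: "card (cut_edges H U - star H w) \<le> 1" .
  show ?thesis
  proof (cases "w \<in> U")
    case True
    define U' where "U' = U - {w}"
    have wU': "w \<notin> U'" and iU: "insert w U' = U" using True by (auto simp: U'_def)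
    have T: "card (cut_edges H U') + card (cut_edges H U) = 2 * card (cut_edges H U' - star H w) + 3"
      using card_cut_insert[OF g wU' cubic_star[OF c wV]] iU by simp
    have "cut_edges H U - star H w = cut_edges H U' - star H w"
      using cut_insert[OF g wU'] iU by blast
    then have "card (cut_edges H U') \<le> 2" using T cs c3 by simp
    then have "U' = {}" using cubic_cut_ge3[OF c t, of U'] U wU' wV by (auto simp: U'_def)
    then have "U = {w}" using True by (auto simp: U'_def)
    then show ?thesis using cut_single[OF g] wV by auto
  next
    case False
    have T: "card (cut_edges H U) + card (cut_edges H (insert w U)) = 2 * card (cut_edges H U - star H w) + 3"
      by (rule card_cut_insert[OF g False cubic_star[OF c wV]])
    then have "card (cut_edges H (insert w U)) \<le> 2" using cs c3 by simp
    then have "insert w U = verts H" using cubic_cut_ge3[OF c t, of "insert w U"] U wV by auto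
    then have "verts H - U = {w}" using False by auto
    then have "cut_edges H U = cut_edges H {w}" using cut_complement[OF g, of U] by simp
    then show ?thesis using cut_single[OF g] wV by auto
  qed
qed

text \<open>Two adjacent vertices of a 3-connected graph with at least five vertices cannot share
  both of their further neighbours: those two neighbours would separate them from the rest.\<close>
lemma three_connected_no_twin_pair:
  assumes t: "three_connected H" and big: "card (verts H) \<ge> 5"
    and n1: "nbrs H y1 = {c, y2, w}" and n2: "nbrs H y2 = {c, y1, w}"
  shows False
proof -
  have g: "graph H" using t by (simp add: three_connected_def)
  have y1: "y1 \<in> verts H" "y1 \<noteq> c" "y1 \<noteq> w"
    using n1 n2 nbrs_subset[OF g, of y2] nbrs_irrefl[OF g, of y1] by auto
  define S where "S = {c, w}"
  have "S \<subseteq> verts H" "card S \<le> 2"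
    using n1 nbrs_subset[OF g, of y1] by (auto simp: S_def card_insert_if)
  then have conn: "connected (delete H S)" using t by (simp add: three_connected_def)
  have "\<not> verts H \<subseteq> {c, w, y1, y2}"
  proof
    assume "verts H \<subseteq> {c, w, y1, y2}"
    then have "card (verts H) \<le> card {c, w, y1, y2}" by (simp add: card_mono)
    also have "\<dots> \<le> 4" by (simp add: card_insert_if)
    finally show False using big by simp
  qed
  then obtain z where z: "z \<in> verts H" "z \<notin> {c, w, y1, y2}" by blast
  have "y1 \<in> verts (delete H S)" "z \<in> verts (delete H S)"
    using y1 z by (auto simp: S_def delete_def verts_def)
  then have "reach (delete H S) y1 z" using conn by (simp add: connected_def)
  then have "z \<in> {y1, y2}"
  proof (rule reach_closed)
    fix p q assume p: "p \<in> {y1, y2}" and e: "{p, q} \<in> edges (delete H S)"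
    then have "q \<in> nbrs H p" "q \<notin> S" by (auto simp: delete_def edges_def nbrs_def)
    then show "q \<in> {y1, y2}" using p n1 n2 by (auto simp: S_def)
  qed simp
  then show False using z by simp
qed

section \<open>The graph composition\<close>

definition other_end :: "'b \<Rightarrow> 'b set \<Rightarrow> 'b" where
  "other_end u f = the_elem (f - {u})"

lemma other_end: "u \<noteq> v \<Longrightarrow> other_end u {u, v} = v"
proof -
  assume "u \<noteq> v"
  then have "{u, v} - {u} = {v}" by auto
  then show ?thesis by (simp add: other_end_def)
qed

locale composition =
  fixes B :: "'b graph" and A :: "'b \<Rightarrow> 'a graph" and a :: "'b \<Rightarrow> 'a"
    and phi :: "'b \<Rightarrow> 'b set \<Rightarrow> 'a"
  assumes cubic_B: "cubic B" and three_connected_B: "three_connected B"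
    and A: "\<And>u. u \<in> verts B \<Longrightarrow> cubic (A u) \<and> three_connected (A u) \<and> a u \<in> verts (A u)"
    and phi: "\<And>u. u \<in> verts B \<Longrightarrow> bij_betw (phi u) {e \<in> edges B. u \<in> e} (nbrs (A u) (a u))"
    and card_A_mod: "\<And>u. u \<in> verts B \<Longrightarrow> card (verts (A u)) mod 6 = 2"
begin

abbreviation "G \<equiv> compose B A a phi"

abbreviation block :: "'b \<Rightarrow> ('b \<times> 'a) set" where
  "block u \<equiv> VA A a u"

definition alpha_edge :: "'b set \<Rightarrow> ('b \<times> 'a) set" where
  "alpha_edge f = (\<lambda>w. (w, phi w f)) ` f"

definition port :: "'b \<Rightarrow> 'b set \<Rightarrow> 'b \<times> 'a" where
  "port u f = (u, phi u f)"

definition far_port :: "'b \<Rightarrow> 'b set \<Rightarrow> 'b \<times> 'a" where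
  "far_port u f = (other_end u f, phi (other_end u f) f)"

lemma graph_B: "graph B" using cubic_B by (simp add: cubic_def)
lemma graph_A: "u \<in> verts B \<Longrightarrow> graph (A u)" using A by (simp add: cubic_def)
lemma a_in_A: "u \<in> verts B \<Longrightarrow> a u \<in> verts (A u)" using A by simp
lemma cubic_A: "u \<in> verts B \<Longrightarrow> cubic (A u)" using A by simp
lemma three_connected_A: "u \<in> verts B \<Longrightarrow> three_connected (A u)" using A by simp
lemma finite_A: "u \<in> verts B \<Longrightarrow> finite (verts (A u))" using graph_A by (simp add: graph_def)
lemma finite_B: "finite (verts B)" using graph_B by (simp add: graph_def)
lemma card_star_B: "u \<in> verts B \<Longrightarrow> card (star B u) = 3" using cubic_star[OF cubic_B] .
lemma finite_star_B: "finite (star B u)" using finite_star[OF graph_B] .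

lemma star_other_end:
  assumes "u \<in> verts B" "f \<in> star B u"
  shows "f = {u, other_end u f} \<and> other_end u f \<noteq> u \<and> other_end u f \<in> verts B \<and> f \<in> edges B"
proof -
  have f: "f \<in> edges B" "u \<in> f" using assms by (auto simp: star_def)
  obtain x y where xy: "x \<noteq> y" "x \<in> verts B" "y \<in> verts B" "f = {x, y}"
    using graph_edgeE[OF graph_B f(1)] by metis
  show ?thesis
  proof (cases "u = x")
    case True then show ?thesis using xy f other_end[of x y] by auto
  next
    case False
    then have "u = y" using xy f by auto
    then show ?thesis using xy f other_end[of y x] by (auto simp: insert_commute)
  qed
qed

lemma other_end_star:
  assumes "u \<in> verts B" "f \<in> star B u"
  shows "f \<in> star B (other_end u f) \<and> other_end (other_end u f) f = u"
proof -
  have s: "f = {u, other_end u f}" "other_end u f \<noteq> u" "f \<in> edges B"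
    using star_other_end[OF assms] by auto
  then have "other_end (other_end u f) f = u" using other_end[of "other_end u f" u] by (metis insert_commute)
  then show ?thesis using s by (auto simp: star_def)
qed

lemma other_end_inj:
  assumes "u \<in> verts B" "f \<in> star B u" "g \<in> star B u" "other_end u f = other_end u g"
  shows "f = g"
proof -
  have "f = {u, other_end u f}" "g = {u, other_end u g}"
    using star_other_end[OF assms(1,2)] star_other_end[OF assms(1,3)] by blast+
  then show ?thesis using assms(4) by simp
qed

lemma phi_port:
  assumes "u \<in> verts B" "f \<in> star B u"
  shows "phi u f \<in> nbrs (A u) (a u) \<and> phi u f \<in> verts (A u) \<and> phi u f \<noteq> a u"
proof -
  have "phi u f \<in> nbrs (A u) (a u)"
    using phi[OF assms(1)] assms(2) unfolding bij_betw_def star_def by auto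
  moreover have "nbrs (A u) (a u) \<subseteq> verts (A u)" by (rule nbrs_subset[OF graph_A[OF assms(1)]])
  moreover have "a u \<notin> nbrs (A u) (a u)" by (rule nbrs_irrefl[OF graph_A[OF assms(1)]])
  ultimately show ?thesis by (metis subsetD)
qed

lemma phi_inj:
  "u \<in> verts B \<Longrightarrow> f \<in> star B u \<Longrightarrow> g \<in> star B u \<Longrightarrow> phi u f = phi u g \<Longrightarrow> f = g"
  using phi unfolding bij_betw_def inj_on_def star_def by blast

lemma nbrs_a: "u \<in> verts B \<Longrightarrow> nbrs (A u) (a u) = phi u ` star B u"
  using phi unfolding bij_betw_def star_def by blast

lemma alpha_eq: "alpha phi u v = alpha_edge {u, v}"
  by (simp add: alpha_def alpha_edge_def insert_commute)

lemma fst_alpha_edge: "fst ` alpha_edge f = f"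
  by (force simp: alpha_edge_def image_image)

lemma alpha_edge_inj: "f \<in> edges B \<Longrightarrow> g \<in> edges B \<Longrightarrow> alpha_edge f = alpha_edge g \<Longrightarrow> f = g"
  using fst_alpha_edge by metis

lemma fst_alpha_edge_not_single:
  assumes f: "f \<in> edges B"
  shows "fst ` alpha_edge f \<noteq> {u}"
proof
  assume "fst ` alpha_edge f = {u}"
  then have "f = {u}" using fst_alpha_edge by simp
  moreover obtain x y where "x \<noteq> y" "f = {x, y}" using graph_edgeE[OF graph_B f] by metis
  ultimately show False by (metis doubleton_eq_iff insert_absorb2)
qed

lemma alpha_edge_ports:
  assumes "u \<in> verts B" "f \<in> star B u"
  shows "alpha_edge f = {port u f, far_port u f}"
proof -
  have s: "f = {u, other_end u f}" using star_other_end[OF assms] by blast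
  show ?thesis unfolding alpha_edge_def port_def far_port_def by (subst s) auto
qed

lemma far_port_port: "far_port u f = port (other_end u f) f"
  by (simp add: far_port_def port_def)

lemma fst_ports: "u \<in> verts B \<Longrightarrow> f \<in> star B u \<Longrightarrow> fst (far_port u f) \<noteq> u \<and> fst (port u f) = u"
  using star_other_end by (simp add: far_port_def port_def)

lemma port_inj:
  "u \<in> verts B \<Longrightarrow> f \<in> star B u \<Longrightarrow> g \<in> star B u \<Longrightarrow> port u f = port u g \<Longrightarrow> f = g"
  using phi_inj by (simp add: port_def)

lemma far_port_inj:
  "u \<in> verts B \<Longrightarrow> f \<in> star B u \<Longrightarrow> g \<in> star B u \<Longrightarrow> far_port u f = far_port u g \<Longrightarrow> f = g"
  using other_end_inj by (simp add: far_port_def)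

lemma verts_G: "p \<in> verts G \<longleftrightarrow> fst p \<in> verts B \<and> snd p \<in> verts (A (fst p)) \<and> snd p \<noteq> a (fst p)"
  by (cases p) (auto simp: compose_def verts_def VA_def)

lemma in_block: "p \<in> block u \<longleftrightarrow> fst p = u \<and> snd p \<in> verts (A u) \<and> snd p \<noteq> a u"
  by (cases p) (auto simp: VA_def)

lemma block_verts_G: "u \<in> verts B \<Longrightarrow> block u \<subseteq> verts G"
  by (auto simp: verts_G in_block)

lemma finite_block: "u \<in> verts B \<Longrightarrow> finite (block u)"
  unfolding VA_def using finite_A by simp

lemma port_in_block: "u \<in> verts B \<Longrightarrow> f \<in> star B u \<Longrightarrow> port u f \<in> block u"
  using phi_port by (simp add: port_def VA_def)

lemma far_port_not_in_block: "u \<in> verts B \<Longrightarrow> f \<in> star B u \<Longrightarrow> far_port u f \<notin> block u"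
  using fst_ports by (auto simp: in_block)

lemma edges_G: "e \<in> edges G \<longleftrightarrow>
   (\<exists>u x y. u \<in> verts B \<and> {x, y} \<in> edges (A u) \<and> x \<noteq> a u \<and> y \<noteq> a u \<and> e = {(u, x), (u, y)})
   \<or> (\<exists>f\<in>edges B. e = alpha_edge f)"
proof -
  have "(\<exists>u v. e = alpha phi u v \<and> {u, v} \<in> edges B) \<longleftrightarrow> (\<exists>f\<in>edges B. e = alpha_edge f)"
  proof
    assume "\<exists>u v. e = alpha phi u v \<and> {u, v} \<in> edges B"
    then show "\<exists>f\<in>edges B. e = alpha_edge f" using alpha_eq by metis
  next
    assume "\<exists>f\<in>edges B. e = alpha_edge f"
    then obtain f where f: "f \<in> edges B" "e = alpha_edge f" by blast
    obtain x y where "f = {x, y}" using graph_edgeE[OF graph_B f(1)] by metis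
    then show "\<exists>u v. e = alpha phi u v \<and> {u, v} \<in> edges B" using f alpha_eq by metis
  qed
  moreover have "e \<in> edges G \<longleftrightarrow>
   (\<exists>u x y. e = {(u, x), (u, y)} \<and> u \<in> verts B \<and> {x, y} \<in> edges (A u) \<and> {x, y} \<inter> {a u} = {})
   \<or> (\<exists>u v. e = alpha phi u v \<and> {u, v} \<in> edges B)"
    by (simp add: compose_def edges_def delete_def)
  ultimately show ?thesis by auto
qed

lemma alpha_edge_in_G: "f \<in> edges B \<Longrightarrow> alpha_edge f \<in> edges G"
  unfolding edges_G by blast

lemma edge_G_cases:
  assumes "e \<in> edges G"
  obtains (inner) u x y where "u \<in> verts B" "{x, y} \<in> edges (A u)" "x \<noteq> a u" "y \<noteq> a u"
      "e = {(u, x), (u, y)}"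
    | (alpha) f where "f \<in> edges B" "e = alpha_edge f"
  using assms edges_G by metis

lemma graph_G: "graph G"
  unfolding graph_def
proof (intro conjI ballI)
  show "finite (verts G)"
    using finite_B finite_A by (simp add: compose_def verts_def VA_def)
next
  fix e assume "e \<in> edges G"
  then show "\<exists>x y. x \<noteq> y \<and> x \<in> verts G \<and> y \<in> verts G \<and> e = {x, y}"
  proof (cases rule: edge_G_cases)
    case (inner u x y)
    then have "x \<noteq> y \<and> x \<in> verts (A u) \<and> y \<in> verts (A u)" using graph_edge[OF graph_A] by blast
    then show ?thesis using inner verts_G by (intro exI[of _ "(u, x)"] exI[of _ "(u, y)"]) auto
  next
    case (alpha f)
    obtain u v where uv: "u \<noteq> v" "u \<in> verts B" "v \<in> verts B" "f = {u, v}"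
      using graph_edgeE[OF graph_B alpha(1)] by metis
    have fs: "f \<in> star B u" "f \<in> star B v" using uv alpha by (auto simp: star_def)
    show ?thesis
      using alpha uv phi_port[OF uv(2) fs(1)] phi_port[OF uv(3) fs(2)] verts_G
      by (intro exI[of _ "(u, phi u f)"] exI[of _ "(v, phi v f)"]) (auto simp: alpha_edge_def)
  qed
qed

lemma edge_G_inside:
  assumes "{(u, y), (u, z)} \<in> edges G"
  shows "u \<in> verts B \<and> {y, z} \<in> edges (A u) \<and> y \<noteq> a u \<and> z \<noteq> a u"
  using assms
proof (cases rule: edge_G_cases)
  case (inner u' x' y')
  then have "u' = u" by auto
  moreover have "{y, z} = {x', y'}"
    using arg_cong[OF inner(5), of "(`) snd"] by simp
  ultimately show ?thesis using inner by auto
next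
  case (alpha f)
  have "fst ` {(u, y), (u, z)} = f" using alpha(2) fst_alpha_edge[of f] by simp
  then have "f = {u}" by simp
  then show ?thesis using fst_alpha_edge_not_single[OF alpha(1)] fst_alpha_edge[of f] by simp
qed

lemma edge_G_across:
  assumes e: "{p, r} \<in> edges G" and ne: "fst r \<noteq> fst p"
  shows "fst p \<in> verts B \<and> (\<exists>f\<in>star B (fst p). p = port (fst p) f \<and> r = far_port (fst p) f)"
  using e
proof (cases rule: edge_G_cases)
  case (inner u' x' y')
  have "p \<in> {(u', x'), (u', y')}" "r \<in> {(u', x'), (u', y')}" using inner(5) by blast+
  then have "fst p = fst r" by auto
  then show ?thesis using ne by simp
next
  case (alpha f)
  obtain v w where vw: "v \<noteq> w" "v \<in> verts B" "w \<in> verts B" "f = {v, w}"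
    using graph_edgeE[OF graph_B alpha(1)] by metis
  have fs: "f \<in> star B v" "f \<in> star B w" using vw alpha by (auto simp: star_def)
  have pr: "{p, r} = {(v, phi v f), (w, phi w f)}" using alpha vw by (simp add: alpha_edge_def)
  have "(p = (v, phi v f) \<and> r = (w, phi w f)) \<or> (p = (w, phi w f) \<and> r = (v, phi v f))"
    using pr ne by (auto simp: doubleton_eq_iff)
  then show ?thesis
  proof
    assume h: "p = (v, phi v f) \<and> r = (w, phi w f)"
    have "other_end v f = w" using vw other_end by metis
    then show ?thesis using h vw fs by (intro conjI bexI[of _ f]) (simp_all add: port_def far_port_def)
  next
    assume h: "p = (w, phi w f) \<and> r = (v, phi v f)"
    have "other_end w f = v" using vw other_end by (metis insert_commute)
    then show ?thesis using h vw fs by (intro conjI bexI[of _ f]) (simp_all add: port_def far_port_def)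
  qed
qed

end

section \<open>Part (a1): a \<open>\<Lambda>\<close>-factor of \<open>G\<close> induces a \<open>\<Lambda>\<close>-factor of \<open>B\<close>\<close>

locale factor_of_G = composition B A a phi
  for B :: "'b graph" and A :: "'b \<Rightarrow> 'a graph" and a phi +
  fixes P :: "('b \<times> 'a) graph"
  assumes factor: "lambda_factor (compose B A a phi) P"
begin

lemma verts_P: "verts P = verts G" and edges_P: "edges P \<subseteq> edges G"
  and shaped_P: "lambda_shaped P" and graph_P: "graph P"
  using lambda_factorD[OF graph_G factor] by blast+

definition cross :: "'b \<Rightarrow> 'b set set" where
  "cross u = {f \<in> star B u. alpha_edge f \<in> edges P}"

definition cross_at :: "'b \<Rightarrow> nat \<Rightarrow> 'b set set" where
  "cross_at u k = {f \<in> cross u. card (nbrs P (port u f)) = k}"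

lemma cross_star: "cross u \<subseteq> star B u"
  by (auto simp: cross_def)

lemma finite_cross: "finite (cross u)" "finite (cross_at u k)"
  using finite_subset[OF cross_star finite_star_B] by (auto simp: cross_at_def)

lemma port_verts_P: "u \<in> verts B \<Longrightarrow> f \<in> star B u \<Longrightarrow> port u f \<in> verts P"
  using port_in_block block_verts_G verts_P by blast

lemma cross_edge: "u \<in> verts B \<Longrightarrow> f \<in> cross u \<Longrightarrow> {port u f, far_port u f} \<in> edges P"
  using alpha_edge_ports[of u f] by (simp add: cross_def)

lemma far_port_nbr: "u \<in> verts B \<Longrightarrow> f \<in> cross u \<Longrightarrow> far_port u f \<in> nbrs P (port u f)"
  using cross_edge by (simp add: nbrs_def)

lemma cross_split: "u \<in> verts B \<Longrightarrow> cross u = cross_at u 1 \<union> cross_at u 2"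
  using lambda_shaped_vertex[OF shaped_P port_verts_P] cross_star
  by (auto simp: cross_at_def)

lemma card_cross:
  assumes u: "u \<in> verts B"
  shows "card (cross u) = card (cross_at u 1) + card (cross_at u 2)"
proof -
  have "cross_at u 1 \<inter> cross_at u 2 = {}" by (auto simp: cross_at_def)
  then show ?thesis unfolding cross_split[OF u] by (rule card_Un_disjoint[OF finite_cross(2,2)])
qed

lemma nbr_outside_block:
  assumes u: "u \<in> verts B" and p: "p \<in> block u" and r: "r \<in> nbrs P p" and rC: "r \<notin> block u"
  shows "\<exists>f\<in>cross u. p = port u f \<and> r = far_port u f"
proof -
  have e: "{p, r} \<in> edges P" using r by (simp add: nbrs_def)
  have rv: "r \<in> verts G" using graph_edge[OF graph_P e] verts_P by simp
  have fp: "fst p = u" using p by (simp add: in_block)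
  have "fst r \<noteq> u" using rv rC by (auto simp: verts_G in_block)
  then obtain f where f: "f \<in> star B u" "p = port u f" "r = far_port u f"
    using edge_G_across[of p r] e edges_P fp by auto
  have "alpha_edge f = {p, r}" using alpha_edge_ports[OF u f(1)] f by simp
  then show ?thesis using e f by (auto simp: cross_def)
qed

lemma boundary_block:
  assumes u: "u \<in> verts B"
  shows "boundary P (block u) k = (\<lambda>f. (port u f, far_port u f)) ` cross_at u k"
proof (rule set_eqI, rule iffI)
  fix x assume "x \<in> boundary P (block u) k"
  then obtain q r where x: "x = (q, r)" "q \<in> block u" "card (nbrs P q) = k"
    "r \<in> nbrs P q" "r \<notin> block u" by (auto simp: boundary_def)
  then obtain f where "f \<in> cross u" "q = port u f" "r = far_port u f"
    using nbr_outside_block[OF u] by blast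
  then show "x \<in> (\<lambda>f. (port u f, far_port u f)) ` cross_at u k" using x by (auto simp: cross_at_def)
next
  fix x assume "x \<in> (\<lambda>f. (port u f, far_port u f)) ` cross_at u k"
  then obtain f where f: "f \<in> cross_at u k" "x = (port u f, far_port u f)" by auto
  then have "f \<in> star B u" "f \<in> cross u" by (auto simp: cross_at_def cross_def)
  then show "x \<in> boundary P (block u) k"
    using f port_in_block[OF u] far_port_nbr[OF u] far_port_not_in_block[OF u]
    by (auto simp: boundary_def cross_at_def)
qed

lemma card_boundary_block:
  assumes u: "u \<in> verts B"
  shows "card (boundary P (block u) k) = card (cross_at u k)"
proof -
  have "inj_on (\<lambda>f. (port u f, far_port u f)) (cross_at u k)"
  proof (rule inj_onI)
    fix f g assume "f \<in> cross_at u k" "g \<in> cross_at u k"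
      and "(port u f, far_port u f) = (port u g, far_port u g)"
    then show "f = g" using port_inj[OF u] cross_star by (auto simp: cross_at_def)
  qed
  then show ?thesis unfolding boundary_block[OF u] by (rule card_image)
qed

lemma card_block_mod: "u \<in> verts B \<Longrightarrow> card (block u) mod 3 = 1"
proof -
  assume u: "u \<in> verts B"
  have "block u = Pair u ` (verts (A u) - {a u})" unfolding VA_def by auto
  then have "card (block u) = card (verts (A u) - {a u})" by (simp add: card_image inj_on_def)
  also have "\<dots> = card (verts (A u)) - 1" using a_in_A[OF u] finite_A[OF u] by simp
  finally have "card (block u) = card (verts (A u)) - 1" .
  moreover obtain k where "card (verts (A u)) = 6 * k + 2"
    using card_A_mod[OF u] by (metis div_mod_decomp mult.commute)
  ultimately have "card (block u) = 1 + 3 * (2 * k)" by simp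
  then show ?thesis by (simp only: mod_mult_self2) simp
qed

text \<open>The count modulo 3 in \<open>A\<^sub>u\<close>, which has \<open>v(A\<^sup>u) - 1 \<equiv> 1\<close> vertices modulo 3.\<close>
lemma cross_count:
  assumes u: "u \<in> verts B"
  shows "(card (cross_at u 2) + 2 * card (cross_at u 1)) mod 3 = 2"
proof -
  have "(card (cross_at u 2) + 2 * card (cross_at u 1)) mod 3 = (2 * card (block u)) mod 3"
    using lambda_shaped_block_count[OF graph_P shaped_P, of "block u"]
      block_verts_G[OF u] verts_P card_boundary_block[OF u] by simp
  also have "\<dots> = (2 * (card (block u) mod 3)) mod 3" by (rule mod_mult_right_eq[symmetric])
  finally show ?thesis using card_block_mod[OF u] by simp
qed

lemma cross_cases:
  assumes u: "u \<in> verts B"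
  shows "(card (cross_at u 1) = 1 \<and> card (cross_at u 2) = 0) \<or>
    (card (cross_at u 1) = 0 \<and> card (cross_at u 2) = 2) \<or>
    (card (cross_at u 1) = 2 \<and> card (cross_at u 2) = 1)"
proof -
  have "card (cross u) \<le> 3"
    using card_mono[OF finite_star_B cross_star, of u] card_star_B[OF u] by simp
  then have "card (cross_at u 1) \<le> 3" "card (cross_at u 2) \<le> 3"
    "card (cross_at u 1) + card (cross_at u 2) \<le> 3"
    using card_cross[OF u] by simp_all
  then have "card (cross_at u 1) \<in> {0, 1, 2, 3}" "card (cross_at u 2) \<in> {0, 1, 2, 3}"
    "card (cross_at u 1) + card (cross_at u 2) \<le> 3" by auto
  then show ?thesis using cross_count[OF u] by auto
qed

lemma centre_port_inner_nbr:
  assumes u: "u \<in> verts B" and f: "f \<in> cross_at u 2"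
  obtains x where "nbrs P (port u f) = {far_port u f, (u, x)}" "nbrs P (u, x) = {port u f}"
    "{phi u f, x} \<in> edges (A u)" "x \<noteq> a u"
proof -
  have fc: "f \<in> cross u" "f \<in> star B u" and c2: "card (nbrs P (port u f)) = 2"
    using f by (auto simp: cross_at_def cross_def)
  obtain r where r: "r \<noteq> far_port u f" "nbrs P (port u f) = {far_port u f, r}"
    using nbrs_pair[OF c2 far_port_nbr[OF u fc(1)]] by blast
  have rC: "r \<in> block u"
  proof (rule ccontr)
    assume "r \<notin> block u"
    then obtain g where "g \<in> cross u" "port u f = port u g" "r = far_port u g"
      using nbr_outside_block[OF u port_in_block[OF u fc(2)], of r] r(2) by blast
    then show False using port_inj[OF u fc(2)] cross_star r(1) by blast
  qed
  then obtain x where rx: "r = (u, x)" by (metis in_block prod.collapse)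
  have "r \<in> nbrs P (port u f)" using r(2) by simp
  then have e: "{port u f, r} \<in> edges P" by (simp add: nbrs_def)
  then have "{(u, phi u f), (u, x)} \<in> edges G" using edges_P rx by (auto simp: port_def)
  then have ax: "{phi u f, x} \<in> edges (A u)" "x \<noteq> a u" using edge_G_inside by blast+
  have "r \<in> verts P" using rC block_verts_G[OF u] verts_P by blast
  then have "card (nbrs P r) = 1"
    using lambda_shaped_edge[OF shaped_P e] lambda_shaped_vertex[OF shaped_P, of r] c2 by auto
  then have "nbrs P r = {port u f}" using nbrs_single nbrs_sym e by (metis mem_Collect_eq nbrs_def)
  then show thesis using that r(2) rx ax by simp
qed

lemma cross_full:
  assumes u: "u \<in> verts B" and c: "card (cross_at u 1) = 2" "card (cross_at u 2) = 1"
  shows "cross u = star B u"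
  using card_subset_eq[OF finite_star_B cross_star] card_star_B[OF u] card_cross[OF u] c by simp

lemma inner_part_closed:
  assumes u: "u \<in> verts B" and full: "cross u = star B u" and f3: "cross_at u 2 = {f3}"
    and x: "nbrs P (port u f3) = {far_port u f3, (u, x)}" "nbrs P (u, x) = {port u f3}"
    and y: "y \<in> verts (A u) - (nbrs (A u) (a u) \<union> {a u, x})" and q: "q \<in> nbrs P (u, y)"
  shows "\<exists>z \<in> verts (A u) - (nbrs (A u) (a u) \<union> {a u, x}). q = (u, z)"
proof -
  have yC: "(u, y) \<in> block u" using y by (simp add: in_block)
  have not_port: "(u, y) \<noteq> port u g" if "g \<in> star B u" for g
    using y phi_port[OF u that] by (auto simp: port_def)
  have qC: "q \<in> block u"
    using nbr_outside_block[OF u yC q] not_port cross_star by blast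
  then obtain z where qz: "q = (u, z)" "z \<in> verts (A u)" "z \<noteq> a u"
    by (metis in_block prod.collapse)
  have yq: "(u, y) \<in> nbrs P q" using q nbrs_sym by metis
  have "z \<noteq> x"
  proof
    assume "z = x"
    then have "(u, y) = port u f3" using yq qz x(2) by simp
    moreover have "f3 \<in> star B u" using f3 by (auto simp: cross_at_def cross_def)
    ultimately show False using not_port by blast
  qed
  moreover have "z \<notin> nbrs (A u) (a u)"
  proof
    assume "z \<in> nbrs (A u) (a u)"
    then obtain g where g: "g \<in> star B u" "q = port u g"
      using nbrs_a[OF u] qz by (auto simp: port_def)
    then have gc: "g \<in> cross_at u 1 \<union> cross_at u 2" using cross_split[OF u] full by blast
    show False
    proof (cases "g \<in> cross_at u 1")
      case True
      then have gc1: "g \<in> cross u" "card (nbrs P q) = 1" using g(2) by (auto simp: cross_at_def)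
      then have "nbrs P q = {far_port u g}"
        using nbrs_single far_port_nbr[OF u gc1(1)] g(2) by metis
      then have "(u, y) = far_port u g" using yq by simp
      then show False using fst_ports[OF u g(1)] by (metis fst_conv)
    next
      case False
      then have "g = f3" using gc f3 by blast
      then have "(u, y) = far_port u g \<or> y = x" using yq g(2) x(1) by auto
      moreover have "(u, y) \<noteq> far_port u g" using fst_ports[OF u g(1)] by (metis fst_conv)
      ultimately show False using y by blast
    qed
  qed
  ultimately show ?thesis using qz by blast
qed

text \<open>The component of \<open>P\<close> through a used port meets \<open>A\<^sub>u\<close> in that port alone exactly
  when the port is a leaf; this is what the orientation of \<open>F(P, G)\<close> measures.\<close>
lemma component_block_single:
  assumes u: "u \<in> verts B" and f: "f \<in> cross u"
  shows "card (verts (component P (port u f)) \<inter> block u) = 1 \<longleftrightarrow> card (nbrs P (port u f)) = 1"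
proof -
  have fs: "f \<in> star B u" using f by (simp add: cross_def)
  have pC: "port u f \<in> block u" by (rule port_in_block[OF u fs])
  have m: "far_port u f \<in> nbrs P (port u f)" by (rule far_port_nbr[OF u f])
  consider (leaf) "card (nbrs P (port u f)) = 1" | (centre) "card (nbrs P (port u f)) = 2"
    using lambda_shaped_vertex[OF shaped_P port_verts_P[OF u fs]] by blast
  then show ?thesis
  proof cases
    case leaf
    have cl: "verts (component P (port u f)) = insert (far_port u f) (nbrs P (far_port u f))"
      using component_of_leaf[OF graph_P shaped_P leaf m] by blast
    have "verts (component P (port u f)) \<inter> block u = {port u f}"
    proof (rule set_eqI, rule iffI)
      fix q assume q: "q \<in> verts (component P (port u f)) \<inter> block u"
      then have "q \<noteq> far_port u f" using far_port_not_in_block[OF u fs] by blast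
      then have "q \<in> nbrs P (far_port u f)" using q cl by blast
      then have "far_port u f \<in> nbrs P q" by (simp add: nbrs_sym[of q])
      then obtain g where "g \<in> cross u" "q = port u g" "far_port u f = far_port u g"
        using nbr_outside_block[OF u _ _ far_port_not_in_block[OF u fs]] q by blast
      then show "q \<in> {port u f}" using far_port_inj[OF u fs] cross_star by blast
    next
      fix q assume "q \<in> {port u f}"
      moreover have "port u f \<in> nbrs P (far_port u f)" using m by (simp add: nbrs_sym[of "port u f"])
      ultimately show "q \<in> verts (component P (port u f)) \<inter> block u"
        using pC cl by simp
    qed
    then show ?thesis using leaf by simp
  next
    case centre
    obtain r where r: "r \<noteq> far_port u f" "nbrs P (port u f) = {far_port u f, r}"
      using nbrs_pair[OF centre m] by blast
    have rC: "r \<in> block u"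
    proof (rule ccontr)
      assume "r \<notin> block u"
      then obtain g where "g \<in> cross u" "port u f = port u g" "r = far_port u g"
        using nbr_outside_block[OF u pC, of r] r by blast
      then show False using port_inj[OF u fs] cross_star r by blast
    qed
    have sub: "{port u f, r} \<subseteq> verts (component P (port u f)) \<inter> block u"
      using component_of_centre[OF graph_P shaped_P centre] r(2) pC rC by auto
    have "port u f \<noteq> r" using r(2) nbrs_irrefl[OF graph_P, of "port u f"] by auto
    then have "card {port u f, r} = 2" by simp
    moreover have "finite (verts (component P (port u f)) \<inter> block u)" using finite_block[OF u] by simp
    ultimately have "card (verts (component P (port u f)) \<inter> block u) \<ge> 2"
      using card_mono[OF _ sub] by metis
    then show ?thesis using centre by simp
  qed
qed

lemma alpha_preimage_eq: "alpha_preimage B phi P = {f \<in> edges B. alpha_edge f \<in> edges P}"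
proof (rule set_eqI, rule iffI)
  fix e assume "e \<in> alpha_preimage B phi P"
  then show "e \<in> {f \<in> edges B. alpha_edge f \<in> edges P}"
    unfolding alpha_preimage_def using alpha_eq by auto
next
  fix e assume e: "e \<in> {f \<in> edges B. alpha_edge f \<in> edges P}"
  then obtain x y where xy: "e = {x, y}" using graph_edgeE[OF graph_B] by blast
  have "alpha phi x y \<in> Eprime B phi" using e xy unfolding Eprime_def by blast
  then show "e \<in> alpha_preimage B phi P"
    using e xy alpha_eq unfolding alpha_preimage_def by auto
qed

end

text \<open>Under hypothesis (h1) the exceptional pattern of \<open>cross_cases\<close> does not occur: it
  would leave a \<open>\<Lambda>\<close>-factor of \<open>A\<^sup>u - (N(a\<^sup>u) \<union> {a\<^sup>u, x})\<close> inside \<open>P\<close>.\<close>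
locale factor_of_G_h1 = factor_of_G B A a phi P
  for B :: "'b graph" and A :: "'b \<Rightarrow> 'a graph" and a phi P +
  assumes h1: "\<And>u x. u \<in> verts B \<Longrightarrow> x \<in> verts (A u) - (nbrs (A u) (a u) \<union> {a u}) \<Longrightarrow>
       (\<exists>y\<in>nbrs (A u) (a u). {x, y} \<in> edges (A u)) \<Longrightarrow>
       \<not> has_lambda_factor (delete (A u) (nbrs (A u) (a u) \<union> {a u, x}))"
begin

lemma not_two_leaf_ports_and_centre_port:
  assumes u: "u \<in> verts B" and c: "card (cross_at u 1) = 2" "card (cross_at u 2) = 1"
  shows False
proof -
  obtain f3 where f3: "cross_at u 2 = {f3}" using c(2) by (metis card_1_singletonE)
  have f3s: "f3 \<in> star B u" using f3 by (auto simp: cross_at_def cross_def)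
  obtain x where x: "nbrs P (port u f3) = {far_port u f3, (u, x)}" "nbrs P (u, x) = {port u f3}"
    "{phi u f3, x} \<in> edges (A u)" "x \<noteq> a u"
    using centre_port_inner_nbr[OF u] f3 by blast
  have full: "cross u = star B u" by (rule cross_full[OF u c])
  define S where "S = nbrs (A u) (a u) \<union> {a u, x}"
  define W where "W = verts (A u) - S"
  have closed: "nbrs P (u, y) \<subseteq> Pair u ` W" if "y \<in> W" for y
    using inner_part_closed[OF u full f3 x(1,2)] that unfolding W_def S_def by blast
  have shaped: "lambda_shaped (pullback (Pair u) W P)"
    by (rule lambda_shaped_pullback[OF shaped_P _ _ closed])
       (use verts_P in \<open>auto simp: W_def S_def verts_G u inj_on_def\<close>)
  have "lambda_factor (delete (A u) S) (pullback (Pair u) W P)"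
    unfolding lambda_factor_iff[OF graph_delete[OF graph_A[OF u]]]
  proof (intro conjI shaped)
    show "verts (pullback (Pair u) W P) = verts (delete (A u) S)"
      by (simp add: pullback_def W_def delete_def verts_def)
    show "edges (pullback (Pair u) W P) \<subseteq> edges (delete (A u) S)"
    proof
      fix e assume "e \<in> edges (pullback (Pair u) W P)"
      then obtain y z where yz: "e = {y, z}" "{(u, y), (u, z)} \<in> edges P" "y \<in> W" "z \<in> W"
        by (auto simp: pullback_def edges_def)
      then have "{y, z} \<in> edges (A u)" using edges_P edge_G_inside by blast
      then show "e \<in> edges (delete (A u) S)" using yz by (auto simp: delete_def edges_def W_def)
    qed
  qed
  then have "has_lambda_factor (delete (A u) S)" unfolding has_lambda_factor_def by blast
  moreover have "x \<notin> nbrs (A u) (a u)"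
  proof
    assume "x \<in> nbrs (A u) (a u)"
    then obtain g where g: "g \<in> star B u" "(u, x) = port u g" using nbrs_a[OF u] by (auto simp: port_def)
    then have "far_port u g \<in> nbrs P (u, x)" using far_port_nbr[OF u] full by simp
    then show False using x(2) fst_ports[OF u g(1)] fst_ports[OF u f3s] by auto
  qed
  moreover have "x \<in> verts (A u)" using graph_edge[OF graph_A[OF u] x(3)] by simp
  moreover have "\<exists>y\<in>nbrs (A u) (a u). {x, y} \<in> edges (A u)"
    using x(3) phi_port[OF u f3s] by (metis insert_commute)
  ultimately show False using h1[OF u] x(4) unfolding S_def by blast
qed

lemma cross_types:
  assumes u: "u \<in> verts B"
  shows "(cross u = cross_at u 1 \<and> card (cross u) = 1) \<or> (cross u = cross_at u 2 \<and> card (cross u) = 2)"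
proof -
  have "(card (cross_at u 1) = 1 \<and> card (cross_at u 2) = 0) \<or>
      (card (cross_at u 1) = 0 \<and> card (cross_at u 2) = 2)"
    using cross_cases[OF u] not_two_leaf_ports_and_centre_port[OF u] by blast
  then show ?thesis using cross_split[OF u] card_cross[OF u] finite_cross by auto
qed

lemma card_cross_1_2: "u \<in> verts B \<Longrightarrow> card (cross u) = 1 \<or> card (cross u) = 2"
  using cross_types by blast

lemma port_centre_iff:
  assumes u: "u \<in> verts B" and f: "f \<in> cross u"
  shows "card (nbrs P (port u f)) = 2 \<longleftrightarrow> card (cross u) = 2"
proof -
  have "f \<in> cross_at u (card (cross u))" using cross_types[OF u] f by auto
  then show ?thesis by (simp add: cross_at_def)
qed

lemma cross_other_end:
  assumes u: "u \<in> verts B" and f: "f \<in> cross u"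
  shows "other_end u f \<in> verts B \<and> f \<in> cross (other_end u f) \<and>
    port (other_end u f) f = far_port u f \<and> other_end (other_end u f) f = u"
proof -
  have fs: "f \<in> star B u" using f by (simp add: cross_def)
  have "other_end u f \<in> verts B" using star_other_end[OF u fs] by blast
  moreover have "f \<in> star B (other_end u f)" "other_end (other_end u f) f = u"
    using other_end_star[OF u fs] by blast+
  moreover have "alpha_edge f \<in> edges P" using f by (simp add: cross_def)
  ultimately show ?thesis using far_port_port[of u f] by (simp add: cross_def)
qed

lemma cross_opposite:
  assumes u: "u \<in> verts B" and f: "f \<in> cross u"
  shows "(card (cross u) = 2) = (card (cross (other_end u f)) \<noteq> 2)"
proof -
  have o: "other_end u f \<in> verts B" "f \<in> cross (other_end u f)" "port (other_end u f) f = far_port u f"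
    using cross_other_end[OF u f] by auto
  have "(card (nbrs P (port u f)) = 2) = (card (nbrs P (far_port u f)) \<noteq> 2)"
    using lambda_shaped_edge[OF shaped_P cross_edge[OF u f]] .
  then show ?thesis using port_centre_iff[OF u f] port_centre_iff[OF o(1) o(2)] o(3) by simp
qed

definition QP :: "'b graph" where
  "QP = (verts B, alpha_preimage B phi P)"

lemma edges_QP: "edges QP = {f \<in> edges B. alpha_edge f \<in> edges P}"
  by (simp add: QP_def edges_def alpha_preimage_eq)

lemma verts_QP: "verts QP = verts B"
  by (simp add: QP_def verts_def)

lemma graph_QP: "graph QP"
  by (rule spanning_subgraph_graph[OF graph_B verts_QP]) (auto simp: edges_QP)

lemma star_QP: "u \<in> verts B \<Longrightarrow> star QP u = cross u"
  by (auto simp: edges_QP cross_def star_def)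

lemma card_nbrs_QP: "u \<in> verts B \<Longrightarrow> card (nbrs QP u) = card (cross u)"
  using star_QP[of u] degree_nbrs[OF graph_QP, of u] by (simp add: degree_def star_def)

theorem QP_lambda_factor: "lambda_factor B QP"
  unfolding lambda_factor_iff[OF graph_B]
proof (intro conjI)
  show "verts QP = verts B" by (rule verts_QP)
  show "edges QP \<subseteq> edges B" using edges_QP by auto
  show "lambda_shaped QP" unfolding lambda_shaped_def
  proof (intro conjI ballI allI impI)
    fix v assume "v \<in> verts QP"
    then show "card (nbrs QP v) = 1 \<or> card (nbrs QP v) = 2"
      using verts_QP card_nbrs_QP card_cross_1_2 by simp
  next
    fix v w assume e: "{v, w} \<in> edges QP"
    then have vw: "v \<noteq> w" "v \<in> verts B" "w \<in> verts B" using graph_edge[OF graph_QP e] verts_QP by auto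
    have f: "{v, w} \<in> cross v" using star_QP[OF vw(2)] e by (auto simp: star_def)
    show "(card (nbrs QP v) = 2) = (card (nbrs QP w) \<noteq> 2)"
      using cross_opposite[OF vw(2) f] other_end[OF vw(1)] card_nbrs_QP vw by simp
  qed
qed

theorem Fvec_QP: "Fvec B A a phi P = difactor QP"
proof -
  have "(u, v) \<in> Fvec B A a phi P \<longleftrightarrow> (u, v) \<in> difactor QP" for u v
  proof (cases "{u, v} \<in> edges QP")
    case True
    then have uv: "u \<noteq> v" "u \<in> verts B" "v \<in> verts B" using graph_edge[OF graph_QP] verts_QP by auto
    have f: "{u, v} \<in> cross u" using star_QP[OF uv(2)] True by (auto simp: star_def)
    have pv: "port u {u, v} \<in> verts P" using port_verts_P[OF uv(2)] f cross_star by blast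
    have "card (verts (component P (u, phi u {u, v})) \<inter> block u) = 1
        \<longleftrightarrow> card (nbrs P (port u {u, v})) \<noteq> 2"
      using component_block_single[OF uv(2) f] lambda_shaped_vertex[OF shaped_P pv]
      by (auto simp: port_def)
    also have "\<dots> \<longleftrightarrow> card (cross v) = 2"
      using port_centre_iff[OF uv(2) f] cross_opposite[OF uv(2) f] other_end[OF uv(1)] by simp
    also have "\<dots> \<longleftrightarrow> degree QP v = 2"
      using card_nbrs_QP[OF uv(3)] degree_nbrs[OF graph_QP] by simp
    finally show ?thesis using True by (auto simp: Fvec_def difactor_def edges_QP alpha_eq)
  next
    case False
    then show ?thesis by (auto simp: Fvec_def difactor_def edges_QP alpha_eq)
  qed
  then show ?thesis by auto
qed

lemma card_alpha_star_P:
  assumes w: "w \<in> verts B"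
  shows "card (alpha_edge ` star B w \<inter> edges P) \<in> {1, 2}"
proof -
  have "alpha_edge ` star B w \<inter> edges P = alpha_edge ` cross w" by (auto simp: cross_def)
  moreover have "inj_on alpha_edge (cross w)"
  proof (rule inj_onI)
    fix f g assume "f \<in> cross w" "g \<in> cross w" "alpha_edge f = alpha_edge g"
    then show "f = g" using alpha_edge_inj by (auto simp: cross_def star_def)
  qed
  ultimately have "card (alpha_edge ` star B w \<inter> edges P) = card (cross w)" by (simp add: card_image)
  then show ?thesis using card_cross_1_2[OF w] by simp
qed

end

section \<open>Part (a3): lifting a \<open>\<Lambda>\<close>-factor of \<open>B\<close> to \<open>G\<close>\<close>

definition nbrs_in :: "'a set set \<Rightarrow> 'a \<Rightarrow> 'a set" where
  "nbrs_in E y = {z. {y, z} \<in> E}"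

lemma nbrs_nbrs_in: "nbrs H y = nbrs_in (edges H) y"
  by (simp add: nbrs_def nbrs_in_def)

context composition
begin

text \<open>A lift of \<open>Q\<close> is assembled block by block.  For a vertex \<open>u\<close> whose \<open>Q\<close>-edges are
  \<open>Qs\<close>, a \<open>local pattern\<close> is an edge set \<open>H\<close> of \<open>A\<^sub>u\<close> that becomes \<open>\<Lambda>\<close>-shaped once the
  ports of \<open>Qs\<close> get their \<open>\<alpha>\<close>-edge, and whose ports are centres exactly when \<open>u\<close> is a
  centre of \<open>Q\<close>.  \<open>pattern_degree\<close> is the degree in \<open>G\<close> after adding the \<open>\<alpha>\<close>-edges.\<close>
definition pattern_degree :: "'b \<Rightarrow> 'a set set \<Rightarrow> 'b set set \<Rightarrow> 'a \<Rightarrow> nat" where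
  "pattern_degree u H Qs y = card (nbrs_in H y) + (if y \<in> phi u ` Qs then 1 else 0)"

definition local_pattern :: "'b \<Rightarrow> 'b set set \<Rightarrow> 'a set set \<Rightarrow> bool" where
  "local_pattern u Qs H \<longleftrightarrow> H \<subseteq> edges (delete (A u) {a u}) \<and>
    (\<forall>y\<in>verts (A u) - {a u}. pattern_degree u H Qs y = 1 \<or> pattern_degree u H Qs y = 2) \<and>
    (\<forall>y z. {y, z} \<in> H \<longrightarrow> (pattern_degree u H Qs y = 2) = (pattern_degree u H Qs z \<noteq> 2)) \<and>
    (\<forall>f\<in>Qs. (pattern_degree u H Qs (phi u f) = 2) = (card Qs = 2))"

lemma card_nbrs_A: "u \<in> verts B \<Longrightarrow> y \<in> verts (A u) \<Longrightarrow> card (nbrs (A u) y) = 3"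
  using A degree_nbrs[OF graph_A] by (simp add: cubic_def)

lemma card_A_ge8: "u \<in> verts B \<Longrightarrow> card (verts (A u)) \<ge> 8"
proof -
  assume u: "u \<in> verts B"
  have "card (verts (A u)) \<ge> 4" using A[OF u] by (simp add: three_connected_def)
  moreover have "card (verts (A u)) mod 6 = 2" using card_A_mod[OF u] .
  ultimately show ?thesis by presburger
qed

text \<open>Two neighbours \<open>y\<^sub>1, y\<^sub>2\<close> of \<open>a\<^sup>u\<close> extend to a 5-vertex path \<open>w\<^sub>1 y\<^sub>1 a\<^sup>u y\<^sub>2 w\<^sub>2\<close>: if
  \<open>y\<^sub>2\<close> had no new neighbour, \<open>y\<^sub>1, y\<^sub>2\<close> would be twins in the 3-connected \<open>A\<^sup>u\<close>.\<close>
lemma path_through_a: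
  assumes u: "u \<in> verts B" and y: "y1 \<noteq> y2" "y1 \<in> nbrs (A u) (a u)" "y2 \<in> nbrs (A u) (a u)"
  shows "\<exists>w1 w2. w1 \<in> nbrs (A u) y1 \<and> w2 \<in> nbrs (A u) y2 \<and> w1 \<notin> {a u, y2} \<and> w2 \<notin> {a u, y1, w1}"
proof -
  have ga: "graph (A u)" by (rule graph_A[OF u])
  have yv: "y1 \<in> verts (A u)" "y2 \<in> verts (A u)" "y2 \<noteq> a u"
    using y nbrs_subset[OF ga] nbrs_irrefl[OF ga] by blast+
  have c1: "card (nbrs (A u) y1) = 3" "card (nbrs (A u) y2) = 3" using card_nbrs_A[OF u] yv by auto
  have "\<not> nbrs (A u) y1 \<subseteq> {a u, y2}"
  proof
    assume "nbrs (A u) y1 \<subseteq> {a u, y2}"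
    then have "card (nbrs (A u) y1) \<le> card {a u, y2}" by (simp add: card_mono)
    also have "\<dots> \<le> 2" by (simp add: card_insert_if)
    finally show False using c1 by simp
  qed
  then obtain w1 where w1: "w1 \<in> nbrs (A u) y1" "w1 \<notin> {a u, y2}" by blast
  have "\<not> nbrs (A u) y2 \<subseteq> {a u, y1, w1}"
  proof
    assume sub2: "nbrs (A u) y2 \<subseteq> {a u, y1, w1}"
    have "card {a u, y1, w1} \<le> 3" by (simp add: card_insert_if)
    then have n2: "nbrs (A u) y2 = {a u, y1, w1}"
      using card_subset_eq[OF _ sub2] card_mono[OF _ sub2] c1 by simp
    have "{a u, y2, w1} \<subseteq> nbrs (A u) y1"
      using n2 y(2) w1 nbrs_sym by (metis empty_subsetI insert_subset insertCI)
    moreover have "card {a u, y2, w1} = 3" using yv(3) w1(2) by (auto simp: card_insert_if)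
    ultimately have n1: "nbrs (A u) y1 = {a u, y2, w1}"
      using card_subset_eq[OF finite_nbrs[OF ga]] c1 by metis
    show False
      using three_connected_no_twin_pair[OF three_connected_A[OF u] _ n1 n2] card_A_ge8[OF u] by simp
  qed
  then obtain w2 where "w2 \<in> nbrs (A u) y2" "w2 \<notin> {a u, y1, w1}" by blast
  then show ?thesis using w1 by blast
qed

text \<open>Local pattern at a leaf of \<open>Q\<close> with edge \<open>f\<close>: a \<open>\<Lambda>\<close>-factor of \<open>A\<^sup>u - {a\<^sup>u, \<phi>(f)}\<close>,
  as provided by (h2); the port \<open>\<phi>(f)\<close> becomes a leaf of the \<open>\<alpha>\<close>-edge.\<close>
lemma local_pattern_leaf:
  assumes u: "u \<in> verts B" and f: "f \<in> star B u"
    and h2: "has_lambda_factor (delete (A u) {a u, phi u f})"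
  shows "\<exists>H. local_pattern u {f} H"
proof -
  define x where "x = phi u f"
  define D where "D = delete (A u) {a u, x}"
  obtain F where F: "lambda_factor D F" using h2 x_def D_def by (auto simp: has_lambda_factor_def)
  have gD: "graph D" using graph_delete[OF graph_A[OF u]] D_def by simp
  note Fp = lambda_factorD[OF gD F]
  have vF: "verts F = verts (A u) - {a u, x}" using Fp(1) by (simp add: D_def delete_def verts_def)
  have eF: "e \<in> edges (A u) \<and> e \<inter> {a u, x} = {}" if "e \<in> edges F" for e
    using that Fp(2) by (auto simp: D_def delete_def edges_def)
  have d: "pattern_degree u (edges F) {f} y = card (nbrs F y) + (if y = x then 1 else 0)" for y
    by (simp add: pattern_degree_def nbrs_nbrs_in x_def)
  have nx: "nbrs F x = {}" using nbrs_outside[OF Fp(4)] vF by auto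
  show ?thesis unfolding local_pattern_def
  proof (intro exI[of _ "edges F"] conjI ballI allI impI)
    show "edges F \<subseteq> edges (delete (A u) {a u})"
      using eF by (auto simp: delete_def edges_def)
  next
    fix y assume y: "y \<in> verts (A u) - {a u}"
    show "pattern_degree u (edges F) {f} y = 1 \<or> pattern_degree u (edges F) {f} y = 2"
    proof (cases "y = x")
      case True then show ?thesis using d nx by simp
    next
      case False
      then have "y \<in> verts F" using vF y by simp
      then show ?thesis using lambda_shaped_vertex[OF Fp(3)] d False by simp
    qed
  next
    fix y z assume e: "{y, z} \<in> edges F"
    then have "y \<noteq> x" "z \<noteq> x" using graph_edge[OF Fp(4) e] vF by auto
    then show "(pattern_degree u (edges F) {f} y = 2) = (pattern_degree u (edges F) {f} z \<noteq> 2)"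
      using lambda_shaped_edge[OF Fp(3) e] d by simp
  next
    fix g assume "g \<in> {f}"
    then show "(pattern_degree u (edges F) {f} (phi u g) = 2) = (card {f} = 2)"
      using d nx x_def by simp
  qed
qed

text \<open>Local pattern at a centre of \<open>Q\<close> with edges \<open>f\<^sub>1, f\<^sub>2\<close>: for a 5-vertex path
  \<open>w\<^sub>1 y\<^sub>1 a\<^sup>u y\<^sub>2 w\<^sub>2\<close> through the ports \<open>y\<^sub>i = \<phi>(f\<^sub>i)\<close>, a \<open>\<Lambda>\<close>-factor \<open>F\<close> of its complement together
  with the two edges \<open>y\<^sub>1w\<^sub>1, y\<^sub>2w\<^sub>2\<close>; with their \<open>\<alpha>\<close>-edges the ports become centres.\<close>
lemma local_pattern_from_path:
  assumes u: "u \<in> verts B" and f: "f1 \<in> star B u" "f2 \<in> star B u" "f1 \<noteq> f2"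
    and y: "y1 = phi u f1" "y2 = phi u f2"
    and w: "w1 \<in> nbrs (A u) y1" "w2 \<in> nbrs (A u) y2" "w1 \<notin> {a u, y2}" "w2 \<notin> {a u, y1, w1}"
    and F: "lambda_factor (delete (A u) {w1, y1, a u, y2, w2}) F"
  shows "local_pattern u {f1, f2} (edges F \<union> {{y1, w1}, {y2, w2}})"
proof -
  define R where "R = {w1, y1, a u, y2, w2}"
  define H where "H = edges F \<union> {{y1, w1}, {y2, w2}}"
  have ga: "graph (A u)" by (rule graph_A[OF u])
  have yi: "y1 \<in> nbrs (A u) (a u)" "y2 \<in> nbrs (A u) (a u)" "y1 \<noteq> a u" "y2 \<noteq> a u"
    using phi_port[OF u f(1)] phi_port[OF u f(2)] y by auto
  have Rdist: "y1 \<noteq> w1" "y1 \<noteq> y2" "y1 \<noteq> w2" "w1 \<noteq> y2" "w1 \<noteq> w2" "y2 \<noteq> w2"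
    using w nbrs_irrefl[OF ga] phi_inj[OF u f(1,2)] f(3) y by auto
  have ed: "{y1, w1} \<in> edges (A u)" "{y2, w2} \<in> edges (A u)" using w by (auto simp: nbrs_def)
  have gD: "graph (delete (A u) R)" using graph_delete[OF ga] .
  note Fp = lambda_factorD[OF gD F[folded R_def]]
  have vF: "verts F = verts (A u) - R" using Fp(1) by (simp add: delete_def verts_def)
  have eF: "e \<in> edges (A u) \<and> e \<inter> R = {}" if "e \<in> edges F" for e
    using that Fp(2) by (auto simp: delete_def edges_def)
  have nR: "nbrs F y = {}" if "y \<in> R" for y using nbrs_outside[OF Fp(4)] vF that by auto
  have nbH: "nbrs_in H y = nbrs_in (edges F) y \<union> (if y = y1 then {w1} else {})
      \<union> (if y = w1 then {y1} else {}) \<union> (if y = y2 then {w2} else {}) \<union> (if y = w2 then {y2} else {})"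
    for y by (auto simp: nbrs_in_def H_def doubleton_eq_iff)
  have img: "phi u ` {f1, f2} = {y1, y2}" by (simp add: y)
  have d_out: "pattern_degree u H {f1, f2} y = card (nbrs F y)" if "y \<notin> R" for y
    using nbH[of y] that unfolding pattern_degree_def img by (simp add: R_def nbrs_nbrs_in)
  have d_y: "pattern_degree u H {f1, f2} y1 = 2" "pattern_degree u H {f1, f2} y2 = 2"
    using nbH[of y1] nbH[of y2] nR[of y1] nR[of y2] Rdist
    unfolding pattern_degree_def img by (simp_all add: R_def nbrs_nbrs_in)
  have d_w: "pattern_degree u H {f1, f2} w1 = 1" "pattern_degree u H {f1, f2} w2 = 1"
    using nbH[of w1] nbH[of w2] nR[of w1] nR[of w2] Rdist w
    unfolding pattern_degree_def img by (simp_all add: R_def nbrs_nbrs_in)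
  show ?thesis unfolding local_pattern_def H_def[symmetric]
  proof (intro conjI ballI allI impI)
    show "H \<subseteq> edges (delete (A u) {a u})"
      using eF ed w yi by (auto simp: H_def R_def delete_def edges_def)
  next
    fix y assume y: "y \<in> verts (A u) - {a u}"
    show "pattern_degree u H {f1, f2} y = 1 \<or> pattern_degree u H {f1, f2} y = 2"
    proof (cases "y \<in> R")
      case True
      then have "y = w1 \<or> y = y1 \<or> y = y2 \<or> y = w2" using y by (auto simp: R_def)
      then show ?thesis using d_y d_w by auto
    next
      case False
      then have "y \<in> verts F" using vF y by simp
      then show ?thesis using lambda_shaped_vertex[OF Fp(3)] d_out False by simp
    qed
  next
    fix y z assume e: "{y, z} \<in> H"
    show "(pattern_degree u H {f1, f2} y = 2) = (pattern_degree u H {f1, f2} z \<noteq> 2)"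
    proof (cases "{y, z} \<in> edges F")
      case True
      then have "y \<notin> R" "z \<notin> R" using eF by auto
      then show ?thesis using lambda_shaped_edge[OF Fp(3) True] d_out by simp
    next
      case False
      then have "{y, z} = {y1, w1} \<or> {y, z} = {y2, w2}" using e by (simp add: H_def)
      then have "(y = y1 \<and> z = w1) \<or> (y = w1 \<and> z = y1) \<or> (y = y2 \<and> z = w2) \<or> (y = w2 \<and> z = y2)"
        by (auto simp: doubleton_eq_iff)
      then show ?thesis using d_y d_w by auto
    qed
  next
    fix g assume "g \<in> {f1, f2}"
    then have "phi u g = y1 \<or> phi u g = y2" using y by auto
    then show "(pattern_degree u H {f1, f2} (phi u g) = 2) = (card {f1, f2} = 2)"
      using d_y f(3) by auto
  qed
qed

lemma local_pattern_centre:
  assumes u: "u \<in> verts B" and f: "f1 \<in> star B u" "f2 \<in> star B u" "f1 \<noteq> f2"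
    and h3: "\<And>w1 w2 w4 w5. distinct [w1, w2, a u, w4, w5] \<Longrightarrow>
       {w1, w2} \<in> edges (A u) \<Longrightarrow> {w2, a u} \<in> edges (A u) \<Longrightarrow>
       {a u, w4} \<in> edges (A u) \<Longrightarrow> {w4, w5} \<in> edges (A u) \<Longrightarrow>
       has_lambda_factor (delete (A u) {w1, w2, a u, w4, w5})"
  shows "\<exists>H. local_pattern u {f1, f2} H"
proof -
  define y1 where "y1 = phi u f1"
  define y2 where "y2 = phi u f2"
  have ga: "graph (A u)" by (rule graph_A[OF u])
  have yi: "y1 \<in> nbrs (A u) (a u)" "y2 \<in> nbrs (A u) (a u)" "y1 \<noteq> a u" "y2 \<noteq> a u"
    using phi_port[OF u f(1)] phi_port[OF u f(2)] y1_def y2_def by auto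
  have y12: "y1 \<noteq> y2" using phi_inj[OF u f(1) f(2)] f(3) y1_def y2_def by blast
  obtain w1 w2 where w: "w1 \<in> nbrs (A u) y1" "w2 \<in> nbrs (A u) y2"
      "w1 \<notin> {a u, y2}" "w2 \<notin> {a u, y1, w1}"
    using path_through_a[OF u y12 yi(1) yi(2)] by blast
  have "w1 \<noteq> y1" "w2 \<noteq> y2" using w nbrs_irrefl[OF ga] by blast+
  then have "has_lambda_factor (delete (A u) {w1, y1, a u, y2, w2})"
    by (intro h3) (use w yi y12 in \<open>auto simp: nbrs_def insert_commute\<close>)
  then obtain F where "lambda_factor (delete (A u) {w1, y1, a u, y2, w2}) F"
    by (auto simp: has_lambda_factor_def)
  then show ?thesis
    using local_pattern_from_path[OF u f y1_def y2_def w] by blast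
qed

end

locale gluing = composition B A a phi
  for B :: "'b graph" and A :: "'b \<Rightarrow> 'a graph" and a phi +
  fixes Q :: "'b graph" and H :: "'b \<Rightarrow> 'a set set"
  assumes factor_Q: "lambda_factor B Q"
    and pattern: "\<And>u. u \<in> verts B \<Longrightarrow> local_pattern u (star Q u) (H u)"
begin

definition inner_edges :: "('b \<times> 'a) set set" where
  "inner_edges = {Pair u ` e | u e. u \<in> verts B \<and> e \<in> H u}"

definition lift :: "('b \<times> 'a) graph" where
  "lift = (verts G, inner_edges \<union> alpha_edge ` edges Q)"

lemma verts_lift: "verts lift = verts G" and edges_lift: "edges lift = inner_edges \<union> alpha_edge ` edges Q"
  by (simp_all add: lift_def verts_def edges_def)

lemma verts_Q: "verts Q = verts B" and edges_Q: "edges Q \<subseteq> edges B"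
  and shaped_Q: "lambda_shaped Q" and graph_Q: "graph Q"
  using lambda_factorD[OF graph_B factor_Q] by blast+

lemma star_Q_star_B: "star Q u \<subseteq> star B u"
  using edges_Q by (auto simp: star_def)

lemma card_star_Q: "card (star Q u) = card (nbrs Q u)"
  using degree_nbrs[OF graph_Q] by (simp add: degree_def star_def)

lemma pattern_edge:
  assumes u: "u \<in> verts B" and e: "e \<in> H u"
  shows "\<exists>p1 p2. e = {p1, p2} \<and> {p1, p2} \<in> edges (A u) \<and> p1 \<noteq> a u \<and> p2 \<noteq> a u"
proof -
  have "e \<in> edges (A u)" "a u \<notin> e"
    using pattern[OF u] e by (auto simp: local_pattern_def delete_def edges_def)
  moreover obtain p1 p2 where "e = {p1, p2}" using graph_edgeE[OF graph_A[OF u]] \<open>e \<in> edges (A u)\<close> by metis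
  ultimately show ?thesis by blast
qed

lemma lift_edge_cases:
  assumes "e \<in> edges lift"
  obtains (inner) u e' where "u \<in> verts B" "e' \<in> H u" "e = Pair u ` e'"
    | (alpha) f where "f \<in> edges Q" "e = alpha_edge f"
  using assms by (auto simp: edges_lift inner_edges_def)

lemma tagged_edge:
  assumes u: "u \<in> verts B" and e': "e' \<in> H u" and e: "{p, q} = Pair u ` e'"
  shows "fst p = u \<and> fst q = u \<and> e' = {snd p, snd q}"
proof -
  have "e' \<noteq> {}" using pattern_edge[OF u e'] by auto
  then have "fst ` {p, q} = {u}" using e by (auto simp: image_image)
  moreover have "snd ` {p, q} = e'" using e by (simp add: image_image)
  ultimately show ?thesis by auto
qed

lemma nbrs_lift:
  assumes u: "u \<in> verts B"
  shows "nbrs lift (u, y) = Pair u ` nbrs_in (H u) y \<union> far_port u ` {f \<in> star Q u. phi u f = y}"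
proof (rule set_eqI, rule iffI)
  fix q assume "q \<in> nbrs lift (u, y)"
  then have "{(u, y), q} \<in> edges lift" by (simp add: nbrs_def)
  then show "q \<in> Pair u ` nbrs_in (H u) y \<union> far_port u ` {f \<in> star Q u. phi u f = y}"
  proof (cases rule: lift_edge_cases)
    case (inner u' e')
    then have h: "u = u'" "fst q = u'" "e' = {y, snd q}" using tagged_edge[of u' e' "(u, y)" q] by auto
    then have "snd q \<in> nbrs_in (H u) y" using inner(2) by (simp add: nbrs_in_def)
    moreover have "q = (u, snd q)" using h by (metis prod.collapse)
    ultimately show ?thesis by blast
  next
    case (alpha f)
    have "(u, y) \<in> alpha_edge f" using alpha(2) by blast
    then have uf: "u \<in> f" "y = phi u f" by (auto simp: alpha_edge_def)
    then have fs: "f \<in> star B u" "f \<in> star Q u" using alpha(1) edges_Q by (auto simp: star_def)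
    have ae: "alpha_edge f = {port u f, far_port u f}" by (rule alpha_edge_ports[OF u fs(1)])
    have "port u f \<noteq> far_port u f" using fst_ports[OF u fs(1)] by metis
    moreover have "{port u f, q} = {port u f, far_port u f}" using alpha(2) ae uf by (simp add: port_def)
    ultimately have "q = far_port u f" by (metis doubleton_eq_iff)
    then show ?thesis using fs uf by blast
  qed
next
  fix q assume "q \<in> Pair u ` nbrs_in (H u) y \<union> far_port u ` {f \<in> star Q u. phi u f = y}"
  then consider (inner) t where "t \<in> nbrs_in (H u) y" "q = (u, t)"
    | (alpha) f where "f \<in> star Q u" "phi u f = y" "q = far_port u f"
    by blast
  then show "q \<in> nbrs lift (u, y)"
  proof cases
    case inner
    then have "Pair u ` {y, t} \<in> inner_edges" unfolding inner_edges_def nbrs_in_def using u by blast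
    then show ?thesis using inner by (simp add: nbrs_def edges_lift)
  next
    case alpha
    then have fs: "f \<in> star B u" "f \<in> edges Q" using star_Q_star_B by (auto simp: star_def)
    have "alpha_edge f = {(u, y), q}" using alpha_edge_ports[OF u fs(1)] alpha by (simp add: port_def)
    then show ?thesis using fs by (auto simp: nbrs_def edges_lift)
  qed
qed

lemma card_nbrs_lift:
  assumes u: "u \<in> verts B"
  shows "card (nbrs lift (u, y)) = pattern_degree u (H u) (star Q u) y"
proof -
  have fin1: "finite (nbrs_in (H u) y)"
  proof (rule finite_subset[OF _ finite_nbrs[OF graph_A[OF u]]])
    show "nbrs_in (H u) y \<subseteq> nbrs (A u) y"
      using pattern[OF u] by (auto simp: local_pattern_def nbrs_in_def nbrs_def delete_def edges_def)
  qed
  have c1: "card (Pair u ` nbrs_in (H u) y) = card (nbrs_in (H u) y)"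
    by (simp add: card_image inj_on_def)
  have c2: "card (far_port u ` {f \<in> star Q u. phi u f = y}) = (if y \<in> phi u ` star Q u then 1 else 0)"
  proof (cases "y \<in> phi u ` star Q u")
    case True
    then obtain f where f: "f \<in> star Q u" "y = phi u f" by blast
    have "{f \<in> star Q u. phi u f = y} = {f}" using f phi_inj[OF u] star_Q_star_B by blast
    then show ?thesis using True by simp
  next
    case False
    then have "{f \<in> star Q u. phi u f = y} = {}" by blast
    then show ?thesis using False by (simp only: image_empty card.empty) simp
  qed
  have disj: "Pair u ` nbrs_in (H u) y \<inter> far_port u ` {f \<in> star Q u. phi u f = y} = {}"
  proof (rule ccontr)
    assume "Pair u ` nbrs_in (H u) y \<inter> far_port u ` {f \<in> star Q u. phi u f = y} \<noteq> {}"
    then obtain t f where "(u, t) = far_port u f" "f \<in> star Q u" by blast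
    then show False using fst_ports[OF u, of f] star_Q_star_B[of u] by (metis fst_conv subsetD)
  qed
  have fin2: "finite (far_port u ` {f \<in> star Q u. phi u f = y})"
    using finite_subset[OF star_Q_star_B finite_star_B] by simp
  show ?thesis unfolding nbrs_lift[OF u] using card_Un_disjoint[OF _ fin2 disj] fin1 c1 c2
    by (simp add: pattern_degree_def)
qed

lemma pattern_degree_port:
  assumes u: "u \<in> verts B" and f: "f \<in> star Q u"
  shows "card (nbrs lift (port u f)) = 2 \<longleftrightarrow> card (nbrs Q u) = 2"
  using pattern[OF u] f card_nbrs_lift[OF u] card_star_Q
  unfolding local_pattern_def port_def by metis

theorem lift_lambda_factor: "lambda_factor G lift"
  unfolding lambda_factor_iff[OF graph_G]
proof (intro conjI)
  show "verts lift = verts G" by (rule verts_lift)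
  show "edges lift \<subseteq> edges G"
  proof
    fix e assume "e \<in> edges lift"
    then show "e \<in> edges G"
    proof (cases rule: lift_edge_cases)
      case (inner u e')
      obtain p1 p2 where "e' = {p1, p2}" "{p1, p2} \<in> edges (A u)" "p1 \<noteq> a u" "p2 \<noteq> a u"
        using pattern_edge[OF inner(1,2)] by blast
      then show ?thesis unfolding edges_G using inner by auto
    next
      case (alpha f)
      then show ?thesis using alpha_edge_in_G edges_Q by blast
    qed
  qed
  show "lambda_shaped lift" unfolding lambda_shaped_def
  proof (intro conjI ballI allI impI)
    fix p assume "p \<in> verts lift"
    then obtain u y where p: "p = (u, y)" "u \<in> verts B" "y \<in> verts (A u) - {a u}"
      using verts_lift verts_G by (metis Diff_iff empty_iff insert_iff prod.collapse)
    then show "card (nbrs lift p) = 1 \<or> card (nbrs lift p) = 2"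
      using card_nbrs_lift pattern unfolding local_pattern_def by metis
  next
    fix p q assume "{p, q} \<in> edges lift"
    then show "(card (nbrs lift p) = 2) = (card (nbrs lift q) \<noteq> 2)"
    proof (cases rule: lift_edge_cases)
      case (inner u e')
      then have fpq: "fst p = u" "fst q = u" "e' = {snd p, snd q}" using tagged_edge by blast+
      then have "(pattern_degree u (H u) (star Q u) (snd p) = 2) =
          (pattern_degree u (H u) (star Q u) (snd q) \<noteq> 2)"
        using pattern[OF inner(1)] inner(2) unfolding local_pattern_def by blast
      then show ?thesis using card_nbrs_lift[OF inner(1)] fpq by (metis prod.collapse)
    next
      case (alpha f)
      obtain u v where uv: "u \<noteq> v" "u \<in> verts B" "v \<in> verts B" "f = {u, v}"
        using graph_edgeE[OF graph_Q alpha(1)] verts_Q by metis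
      have fQ: "f \<in> star Q u" "f \<in> star Q v" using uv alpha(1) by (auto simp: star_def)
      have "(card (nbrs Q u) = 2) = (card (nbrs Q v) \<noteq> 2)"
        using lambda_shaped_edge[OF shaped_Q] alpha(1) uv by metis
      then have X: "(card (nbrs lift (port u f)) = 2) = (card (nbrs lift (port v f)) \<noteq> 2)"
        using pattern_degree_port[OF uv(2) fQ(1)] pattern_degree_port[OF uv(3) fQ(2)] by simp
      have "{p, q} = {port u f, port v f}" using alpha(2) uv by (simp add: alpha_edge_def port_def)
      then show ?thesis using X by (auto simp: doubleton_eq_iff)
    qed
  qed
qed

theorem Fvec_lift: "Fvec B A a phi lift = difactor Q"
proof -
  interpret L: factor_of_G B A a phi lift
    by unfold_locales (rule lift_lambda_factor)
  have in_Q: "{u, v} \<in> edges Q" if "{u, v} \<in> edges B" "alpha_edge {u, v} \<in> edges lift" for u v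
    using that(2)
  proof (cases rule: lift_edge_cases)
    case (inner w e')
    have "e' \<noteq> {}" using pattern_edge[OF inner(1,2)] by auto
    then have "fst ` alpha_edge {u, v} = {w}" using inner(3) by (auto simp: image_image)
    then show ?thesis using fst_alpha_edge_not_single[OF that(1)] by blast
  next
    case (alpha g)
    then show ?thesis using fst_alpha_edge by metis
  qed
  have key: "card (verts (component lift (u, phi u {u, v})) \<inter> block u) = 1 \<longleftrightarrow> degree Q v = 2"
    if e: "{u, v} \<in> edges Q" for u v
  proof -
    have uv: "u \<noteq> v" "u \<in> verts B" "v \<in> verts B" using graph_edge[OF graph_Q e] verts_Q by auto
    have fQ: "{u, v} \<in> star Q u" using e by (simp add: star_def)
    have fs: "{u, v} \<in> star B u" using fQ star_Q_star_B by blast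
    have fK: "{u, v} \<in> L.cross u" using fs e by (auto simp: L.cross_def edges_lift)
    have pv: "port u {u, v} \<in> verts lift" using L.port_verts_P[OF uv(2) fs] .
    have "card (verts (component lift (u, phi u {u, v})) \<inter> block u) = 1
        \<longleftrightarrow> card (nbrs lift (port u {u, v})) \<noteq> 2"
      using L.component_block_single[OF uv(2) fK] lambda_shaped_vertex[OF L.shaped_P pv]
      by (auto simp: port_def)
    also have "\<dots> \<longleftrightarrow> card (nbrs Q v) = 2"
      using pattern_degree_port[OF uv(2) fQ] lambda_shaped_edge[OF shaped_Q e] by simp
    finally show ?thesis using degree_nbrs[OF graph_Q] by simp
  qed
  have "(u, v) \<in> Fvec B A a phi lift \<longleftrightarrow> (u, v) \<in> difactor Q" for u v
    using key in_Q edges_Q by (auto simp: Fvec_def difactor_def alpha_eq edges_lift)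
  then show ?thesis by auto
qed

end

context composition
begin

theorem lift_exists:
  assumes h2: "\<And>u z. u \<in> verts B \<Longrightarrow> {a u, z} \<in> edges (A u) \<Longrightarrow>
       has_lambda_factor (delete (A u) {a u, z})"
    and h3: "\<And>u w1 w2 w4 w5. u \<in> verts B \<Longrightarrow> distinct [w1, w2, a u, w4, w5] \<Longrightarrow>
       {w1, w2} \<in> edges (A u) \<Longrightarrow> {w2, a u} \<in> edges (A u) \<Longrightarrow>
       {a u, w4} \<in> edges (A u) \<Longrightarrow> {w4, w5} \<in> edges (A u) \<Longrightarrow>
       has_lambda_factor (delete (A u) {w1, w2, a u, w4, w5})"
    and Q: "lambda_factor B Q"
  shows "\<exists>P. lambda_factor G P \<and> Fvec B A a phi P = difactor Q"
proof -
  note Qp = lambda_factorD[OF graph_B Q]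
  have "\<exists>H. local_pattern u (star Q u) H" if u: "u \<in> verts B" for u
  proof -
    have sub: "star Q u \<subseteq> star B u" using Qp(2) by (auto simp: star_def)
    have "card (star Q u) = card (nbrs Q u)"
      using degree_nbrs[OF Qp(4)] by (simp add: degree_def star_def)
    then consider "card (star Q u) = 1" | "card (star Q u) = 2"
      using lambda_shaped_vertex[OF Qp(3)] Qp(1) u by fastforce
    then show ?thesis
    proof cases
      case 1
      then obtain f where f: "star Q u = {f}" by (metis card_1_singletonE)
      then have fs: "f \<in> star B u" using sub by blast
      have "{a u, phi u f} \<in> edges (A u)" using phi_port[OF u fs] by (simp add: nbrs_def)
      then show ?thesis using local_pattern_leaf[OF u fs h2[OF u]] f by simp
    next
      case 2
      then obtain f1 f2 where f: "f1 \<noteq> f2" "star Q u = {f1, f2}" by (metis card_2_iff)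
      then have "f1 \<in> star B u" "f2 \<in> star B u" using sub by blast+
      then show ?thesis using local_pattern_centre[OF u _ _ f(1) h3[OF u]] f by simp
    qed
  qed
  then obtain H where H: "\<And>u. u \<in> verts B \<Longrightarrow> local_pattern u (star Q u) (H u)" by metis
  interpret gluing B A a phi Q H
    by unfold_locales (use Q H in auto)
  show ?thesis using lift_lambda_factor Fvec_lift by blast
qed

end

section \<open>Part (a2): the 3-blockades of \<open>G\<close>\<close>

context composition
begin

definition slice :: "('b \<times> 'a) set \<Rightarrow> 'b \<Rightarrow> 'a set" where
  "slice X u = {y. (u, y) \<in> X}"

definition inner_cut :: "('b \<times> 'a) set \<Rightarrow> 'b \<Rightarrow> ('b \<times> 'a) set set" where
  "inner_cut X u = {e \<in> cut_edges G X. fst ` e = {u}}"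

lemma slice_subset: "X \<subseteq> verts G \<Longrightarrow> slice X u \<subseteq> verts (A u) - {a u}"
  unfolding slice_def using verts_G by force

lemma card_star_a: "u \<in> verts B \<Longrightarrow> card (star (A u) (a u)) = 3"
  using cubic_star[OF cubic_A a_in_A] .

lemma inner_cut_eq:
  assumes u: "u \<in> verts B"
  shows "inner_cut X u = (\<lambda>e. Pair u ` e) ` (cut_edges (A u) (slice X u) - star (A u) (a u))"
proof (rule set_eqI, rule iffI)
  fix e assume e: "e \<in> inner_cut X u"
  then have eK: "e \<in> cut_edges G X" and fe: "fst ` e = {u}" by (auto simp: inner_cut_def)
  have eG: "e \<in> edges G" using eK cut_subset by blast
  obtain p q where pq: "e = {p, q}" using graph_edgeE[OF graph_G eG] by metis
  obtain y z where pq2: "p = (u, y)" "q = (u, z)" using fe pq by (metis insertCI prod.collapse singletonD image_eqI)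
  have yz: "{y, z} \<in> edges (A u)" "y \<noteq> a u" "z \<noteq> a u"
    using edge_G_inside eG pq pq2 by blast+
  have "(y \<in> slice X u) = (z \<notin> slice X u)"
    using cut_mem[OF graph_G, of p q X] eG eK pq pq2 by (simp add: slice_def)
  then have "{y, z} \<in> cut_edges (A u) (slice X u) - star (A u) (a u)"
    using cut_mem[OF graph_A[OF u] yz(1)] yz by (simp add: star_def)
  moreover have "e = Pair u ` {y, z}" using pq pq2 by simp
  ultimately show "e \<in> (\<lambda>e. Pair u ` e) ` (cut_edges (A u) (slice X u) - star (A u) (a u))" by blast
next
  fix e assume "e \<in> (\<lambda>e. Pair u ` e) ` (cut_edges (A u) (slice X u) - star (A u) (a u))"
  then obtain e' where e': "e' \<in> cut_edges (A u) (slice X u)" "e' \<notin> star (A u) (a u)" "e = Pair u ` e'"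
    by blast
  have eA: "e' \<in> edges (A u)" using e'(1) cut_subset by blast
  obtain y z where yz: "e' = {y, z}" using graph_edgeE[OF graph_A[OF u] eA] by metis
  have ya: "y \<noteq> a u" "z \<noteq> a u" using e'(2) eA yz by (auto simp: star_def)
  have eG: "{(u, y), (u, z)} \<in> edges G"
    unfolding edges_G using u eA yz ya by blast
  have "(y \<in> slice X u) = (z \<notin> slice X u)" using cut_mem[OF graph_A[OF u]] eA yz e'(1) by simp
  then have "{(u, y), (u, z)} \<in> cut_edges G X" using cut_mem[OF graph_G eG] by (simp add: slice_def)
  then show "e \<in> inner_cut X u" using e'(3) yz by (simp add: inner_cut_def)
qed

lemma card_inner_cut:
  assumes u: "u \<in> verts B"
  shows "card (inner_cut X u) = card (cut_edges (A u) (slice X u) - star (A u) (a u))"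
proof -
  have "inj_on (\<lambda>e. Pair u ` e) (cut_edges (A u) (slice X u) - star (A u) (a u))"
    by (rule inj_onI) (simp add: inj_image_eq_iff inj_on_def)
  then show ?thesis using inner_cut_eq[OF u] by (simp add: card_image)
qed

text \<open>If \<open>X\<close> splits the block of \<open>u\<close>, the inner cut has at least two edges: both the slice and
  the slice together with \<open>a\<^sup>u\<close> have cuts of size at least 3 in \<open>A\<^sup>u\<close>, and they differ only
  at the three edges at \<open>a\<^sup>u\<close>.\<close>
lemma card_inner_cut_ge2:
  assumes u: "u \<in> verts B" and X: "X \<subseteq> verts G"
    and sp: "slice X u \<noteq> {}" "slice X u \<noteq> verts (A u) - {a u}"
  shows "card (inner_cut X u) \<ge> 2"
proof -
  have sub: "slice X u \<subseteq> verts (A u) - {a u}" by (rule slice_subset[OF X])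
  have na: "a u \<notin> slice X u" using sub by blast
  have T: "card (cut_edges (A u) (slice X u)) + card (cut_edges (A u) (insert (a u) (slice X u)))
      = 2 * card (cut_edges (A u) (slice X u) - star (A u) (a u)) + 3"
    by (rule card_cut_insert[OF graph_A[OF u] na card_star_a[OF u]])
  have "card (cut_edges (A u) (slice X u)) \<ge> 3"
    using cubic_cut_ge3[OF cubic_A[OF u] three_connected_A[OF u]] sub sp(1) a_in_A[OF u] by blast
  moreover have "card (cut_edges (A u) (insert (a u) (slice X u))) \<ge> 3"
  proof (rule cubic_cut_ge3[OF cubic_A[OF u] three_connected_A[OF u]])
    show "insert (a u) (slice X u) \<subseteq> verts (A u)" using sub a_in_A[OF u] by blast
    show "insert (a u) (slice X u) \<noteq> verts (A u)" using sp(2) sub na by blast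
  qed simp
  ultimately show ?thesis using T card_inner_cut[OF u, of X] by linarith
qed

lemma alpha_edge_cut:
  assumes f: "f \<in> edges B" "f = {v, w}"
  shows "alpha_edge f \<in> cut_edges G X \<longleftrightarrow> (((v, phi v f) \<in> X) = ((w, phi w f) \<notin> X))"
proof -
  have "{(v, phi v f), (w, phi w f)} \<in> edges G" using alpha_edge_in_G[OF f(1)] f(2) by (simp add: alpha_edge_def)
  then show ?thesis using cut_mem[OF graph_G] f(2) by (simp add: alpha_edge_def)
qed

lemma cut_G_cases:
  assumes "e \<in> cut_edges G X"
  obtains (inner) u where "u \<in> verts B" "e \<in> inner_cut X u"
    | (alpha) f where "f \<in> edges B" "e = alpha_edge f"
proof -
  have "e \<in> edges G" using assms cut_subset by blast
  then show ?thesis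
  proof (cases rule: edge_G_cases)
    case (inner u x y)
    then have "fst ` e = {u}" by auto
    then show ?thesis using that(1)[of u] inner(1) assms by (simp add: inner_cut_def)
  qed (use that(2) in blast)
qed

definition ports_in :: "('b \<times> 'a) set \<Rightarrow> 'b \<Rightarrow> 'b set set" where
  "ports_in X u = {f \<in> star B u. phi u f \<in> slice X u}"

lemma cut_in_block:
  assumes u: "u \<in> verts B" and XC: "X \<subseteq> block u"
  shows "cut_edges G X = inner_cut X u \<union> alpha_edge ` ports_in X u"
proof -
  have Xeq: "p \<in> X \<longleftrightarrow> fst p = u \<and> snd p \<in> slice X u" for p
    using XC by (cases p) (auto simp: slice_def in_block)
  have "e \<in> cut_edges G X \<longleftrightarrow> e \<in> inner_cut X u \<union> alpha_edge ` ports_in X u" for e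
  proof
    assume e: "e \<in> cut_edges G X"
    then show "e \<in> inner_cut X u \<union> alpha_edge ` ports_in X u"
    proof (cases rule: cut_G_cases)
      case (inner v)
      have eG: "e \<in> edges G" using e cut_subset by blast
      obtain p q where pq: "e = {p, q}" using graph_edgeE[OF graph_G eG] by metis
      have "(p \<in> X) = (q \<notin> X)" using cut_mem[OF graph_G, of p q X] eG e pq by simp
      then have "p \<in> X \<or> q \<in> X" by blast
      then have "fst p = u \<or> fst q = u" using Xeq[of p] Xeq[of q] by blast
      moreover have "fst ` e = {v}" using inner by (simp add: inner_cut_def)
      ultimately have "v = u" using pq by auto
      then show ?thesis using inner by simp
    next
      case (alpha f)
      obtain v w where vw: "f = {v, w}" using graph_edgeE[OF graph_B alpha(1)] by metis
      have "((v, phi v f) \<in> X) = ((w, phi w f) \<notin> X)"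
        using alpha_edge_cut[OF alpha(1) vw] e alpha(2) by simp
      then have "(v, phi v f) \<in> X \<or> (w, phi w f) \<in> X" by blast
      then have "(v = u \<and> phi u f \<in> slice X u) \<or> (w = u \<and> phi u f \<in> slice X u)"
        using Xeq[of "(v, phi v f)"] Xeq[of "(w, phi w f)"] by auto
      then have "f \<in> ports_in X u" using alpha(1) vw by (auto simp: ports_in_def star_def)
      then show ?thesis using alpha(2) by simp
    qed
  next
    assume "e \<in> inner_cut X u \<union> alpha_edge ` ports_in X u"
    then show "e \<in> cut_edges G X"
    proof
      assume "e \<in> alpha_edge ` ports_in X u"
      then obtain f where f: "f \<in> ports_in X u" "e = alpha_edge f" by blast
      have fs: "f \<in> star B u" "phi u f \<in> slice X u" using f by (auto simp: ports_in_def)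
      have o: "f = {u, other_end u f}" "other_end u f \<noteq> u" "f \<in> edges B"
        using star_other_end[OF u fs(1)] by auto
      have "(u, phi u f) \<in> X" "(other_end u f, phi (other_end u f) f) \<notin> X"
        using fs o Xeq[of "(u, phi u f)"] Xeq[of "(other_end u f, phi (other_end u f) f)"] by auto
      then show ?thesis using alpha_edge_cut[OF o(3) o(1)] f by simp
    qed (simp add: inner_cut_def)
  qed
  then show ?thesis by blast
qed

lemma card_cut_in_block:
  assumes u: "u \<in> verts B" and XC: "X \<subseteq> block u"
  shows "card (cut_edges G X) = card (inner_cut X u) + card (ports_in X u)"
proof -
  have disj: "inner_cut X u \<inter> alpha_edge ` ports_in X u = {}"
    using fst_alpha_edge_not_single by (auto simp: inner_cut_def ports_in_def star_def)
  have inj: "inj_on alpha_edge (ports_in X u)"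
    by (rule inj_onI) (use alpha_edge_inj in \<open>auto simp: ports_in_def star_def\<close>)
  have fin: "finite (ports_in X u)" using finite_subset[OF _ finite_star_B[of u]] by (auto simp: ports_in_def)
  have "finite (inner_cut X u)" using finite_cut[OF graph_G] by (simp add: inner_cut_def)
  then show ?thesis
    using cut_in_block[OF u XC] card_Un_disjoint[OF _ _ disj] fin card_image[OF inj] by simp
qed

lemma cut_slice_star_a:
  assumes u: "u \<in> verts B" and X: "X \<subseteq> verts G"
  shows "cut_edges (A u) (slice X u) \<inter> star (A u) (a u) = (\<lambda>f. {a u, phi u f}) ` ports_in X u"
proof (rule set_eqI, rule iffI)
  have aY: "a u \<notin> slice X u" using slice_subset[OF X] by blast
  fix e assume e: "e \<in> cut_edges (A u) (slice X u) \<inter> star (A u) (a u)"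
  then have eA: "e \<in> edges (A u)" "a u \<in> e" by (auto simp: star_def)
  obtain p q where pq: "e = {p, q}" using graph_edgeE[OF graph_A[OF u] eA(1)] by metis
  define z where "z = (if p = a u then q else p)"
  have ez: "e = {a u, z}" using pq eA(2) z_def by auto
  obtain f where f: "f \<in> star B u" "z = phi u f"
    using eA(1) ez nbrs_a[OF u] by (auto simp: nbrs_def)
  have "z \<in> slice X u" using cut_mem[OF graph_A[OF u]] eA(1) ez e aY by auto
  then show "e \<in> (\<lambda>f. {a u, phi u f}) ` ports_in X u" using ez f by (auto simp: ports_in_def)
next
  have aY: "a u \<notin> slice X u" using slice_subset[OF X] by blast
  fix e assume "e \<in> (\<lambda>f. {a u, phi u f}) ` ports_in X u"
  then obtain f where f: "f \<in> star B u" "phi u f \<in> slice X u" "e = {a u, phi u f}"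
    by (auto simp: ports_in_def)
  have eA: "e \<in> edges (A u)" using phi_port[OF u f(1)] f(3) by (simp add: nbrs_def)
  then show "e \<in> cut_edges (A u) (slice X u) \<inter> star (A u) (a u)"
    using cut_mem[OF graph_A[OF u]] f aY by (auto simp: star_def)
qed

lemma card_cut_slice_star_a:
  assumes u: "u \<in> verts B" and X: "X \<subseteq> verts G"
  shows "card (cut_edges (A u) (slice X u) \<inter> star (A u) (a u)) = card (ports_in X u)"
proof -
  have "inj_on (\<lambda>f. {a u, phi u f}) (ports_in X u)"
  proof (rule inj_onI)
    fix f g assume fg: "f \<in> ports_in X u" "g \<in> ports_in X u" "{a u, phi u f} = {a u, phi u g}"
    have fs: "f \<in> star B u" "g \<in> star B u" using fg by (auto simp: ports_in_def)
    have "phi u f \<noteq> a u" using phi_port[OF u fs(1)] by simp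
    then have "phi u f = phi u g" using fg(3) by (auto simp: doubleton_eq_iff)
    then show "f = g" using phi_inj[OF u fs] by simp
  qed
  then show ?thesis using cut_slice_star_a[OF u X] by (simp add: card_image)
qed

text \<open>If the cut of \<open>X\<close> is a matching, an inner cut edge avoids the ports in \<open>X\<close>: otherwise it
  would meet the \<open>\<alpha>\<close>-edge of that port.\<close>
lemma inner_cut_edge_avoids_ports:
  assumes u: "u \<in> verts B" and XC: "X \<subseteq> block u" and m: "matching (cut_edges G X)"
    and e: "e \<in> cut_edges (A u) (slice X u) - star (A u) (a u)" and f: "f \<in> ports_in X u"
  shows "phi u f \<notin> e"
proof
  assume pe: "phi u f \<in> e"
  have fs: "f \<in> star B u" using f by (simp add: ports_in_def)
  have "Pair u ` e \<in> inner_cut X u" unfolding inner_cut_eq[OF u] using e by (rule imageI)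
  then have c1: "Pair u ` e \<in> cut_edges G X" by (simp add: inner_cut_def)
  have c2: "alpha_edge f \<in> cut_edges G X" using cut_in_block[OF u XC] f by blast
  have "port u f \<in> Pair u ` e \<inter> alpha_edge f"
    using pe alpha_edge_ports[OF u fs] by (simp add: port_def)
  moreover have "Pair u ` e \<noteq> alpha_edge f"
  proof
    assume eq: "Pair u ` e = alpha_edge f"
    have "e \<noteq> {}" using pe by blast
    then have "fst ` Pair u ` e = {u}" by (auto simp: image_image)
    then have "fst ` alpha_edge f = {u}" using eq by simp
    then show False using fst_alpha_edge_not_single star_other_end[OF u fs] by blast
  qed
  ultimately show False using m c1 c2 unfolding matching_def by blast
qed

text \<open>If at most one port lies in \<open>X\<close>, the cut of the slice in \<open>A\<^sup>u\<close> inherits the matching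
  property: its edges at \<open>a\<^sup>u\<close> number at most one, the others are inner cut edges, and an
  edge at \<open>a\<^sup>u\<close> avoids the inner cut edges by \<open>inner_cut_edge_avoids_ports\<close>.\<close>
lemma matching_cut_slice:
  assumes u: "u \<in> verts B" and XC: "X \<subseteq> block u" and m: "matching (cut_edges G X)"
    and nx1: "card (ports_in X u) \<le> 1"
  shows "matching (cut_edges (A u) (slice X u))"
  unfolding matching_def
proof (intro ballI impI)
  have X: "X \<subseteq> verts G" using XC block_verts_G[OF u] by blast
  define CA where "CA = cut_edges (A u) (slice X u)"
  have finCA: "finite CA" using finite_cut[OF graph_A[OF u]] by (simp add: CA_def)
  have cS: "card (CA \<inter> star (A u) (a u)) = card (ports_in X u)"
    using card_cut_slice_star_a[OF u X] by (simp add: CA_def)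
  fix e e' assume e: "e \<in> cut_edges (A u) (slice X u)" and e': "e' \<in> cut_edges (A u) (slice X u)" and ne: "e \<noteq> e'"
  consider (both) "e \<in> star (A u) (a u)" "e' \<in> star (A u) (a u)"
    | (none) "e \<notin> star (A u) (a u)" "e' \<notin> star (A u) (a u)"
    | (one) d d' where "{d, d'} = {e, e'}" "d \<in> star (A u) (a u)" "d' \<notin> star (A u) (a u)"
    by blast
  then show "e \<inter> e' = {}"
  proof cases
    case both
    then have "{e, e'} \<subseteq> CA \<inter> star (A u) (a u)" using e e' by (auto simp: CA_def)
    then have "card {e, e'} \<le> card (CA \<inter> star (A u) (a u))" using finCA by (simp add: card_mono)
    then show ?thesis using ne cS nx1 by simp
  next
    case none
    then have "Pair u ` e \<in> inner_cut X u" "Pair u ` e' \<in> inner_cut X u"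
      unfolding inner_cut_eq[OF u] using e e' by blast+
    moreover have "Pair u ` e \<noteq> Pair u ` e'" using ne by (simp add: inj_image_eq_iff inj_on_def)
    ultimately have ce: "Pair u ` e \<in> cut_edges G X" "Pair u ` e' \<in> cut_edges G X" "Pair u ` e \<noteq> Pair u ` e'"
      by (auto simp: inner_cut_def)
    have "Pair u ` e \<inter> Pair u ` e' = {}" using m[unfolded matching_def, rule_format, OF ce] .
    then show ?thesis by auto
  next
    case one
    then have dd: "d \<in> CA" "d' \<in> CA" using e e' by (auto simp: CA_def)
    obtain f where f: "f \<in> ports_in X u" "d = {a u, phi u f}"
      using cut_slice_star_a[OF u X] dd(1) one(2) by (auto simp: CA_def)
    have "d' \<in> edges (A u)" using dd(2) cut_subset[of "A u"] by (auto simp: CA_def)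
    then have "a u \<notin> d'" using one(3) by (simp add: star_def)
    moreover have "phi u f \<notin> d'"
      using inner_cut_edge_avoids_ports[OF u XC m _ f(1)] dd(2) one(3) by (simp add: CA_def)
    ultimately have "d \<inter> d' = {}" using f(2) by auto
    moreover have "(d = e \<and> d' = e') \<or> (d = e' \<and> d' = e)" using one(1) by (simp add: doubleton_eq_iff)
    ultimately show ?thesis by blast
  qed
qed

text \<open>A 3-blockade of \<open>G\<close> whose side lies in one block and splits it yields a 3-blockade of
  \<open>A\<^sup>u\<close>: the inner cut has at least two edges, so at most one port lies in \<open>X\<close>, and the
  cut of the slice in \<open>A\<^sup>u\<close> is again a 3-edge matching.\<close>
lemma blockade_in_block:
  assumes u: "u \<in> verts B" and XC: "X \<subseteq> block u"
    and sp: "slice X u \<noteq> {}" "slice X u \<noteq> verts (A u) - {a u}"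
    and m: "matching (cut_edges G X)" and c3: "card (cut_edges G X) = 3"
  shows "three_blockade (A u) (cut_edges (A u) (slice X u))"
proof -
  have X: "X \<subseteq> verts G" using XC block_verts_G[OF u] by blast
  define CA where "CA = cut_edges (A u) (slice X u)"
  have "card (inner_cut X u) \<ge> 2" using card_inner_cut_ge2[OF u X sp] .
  then have nx1: "card (ports_in X u) \<le> 1" using card_cut_in_block[OF u XC] c3 by simp
  have finCA: "finite CA" using finite_cut[OF graph_A[OF u]] by (simp add: CA_def)
  have "card CA = card (CA \<inter> star (A u) (a u)) + card (CA - star (A u) (a u))"
    by (rule card_Int_Diff[OF finCA])
  also have "\<dots> = card (ports_in X u) + card (inner_cut X u)"
    using card_cut_slice_star_a[OF u X] card_inner_cut[OF u, of X] by (simp add: CA_def)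
  finally have cCA: "card CA = 3" using card_cut_in_block[OF u XC] c3 by simp
  have "edge_cut (A u) CA"
    unfolding edge_cut_iff CA_def using slice_subset[OF X] a_in_A[OF u] sp by blast
  then show ?thesis
    using matching_cut_slice[OF u XC m nx1] cCA by (simp add: three_blockade_def CA_def)
qed

definition splits :: "('b \<times> 'a) set \<Rightarrow> 'b \<Rightarrow> bool" where
  "splits X u \<longleftrightarrow> slice X u \<noteq> {} \<and> slice X u \<noteq> verts (A u) - {a u}"

lemma unsplit_side:
  assumes "\<not> splits X v" "y \<in> verts (A v) - {a v}"
  shows "(v, y) \<in> X \<longleftrightarrow> slice X v \<noteq> {}"
proof -
  have "slice X v = {} \<or> slice X v = verts (A v) - {a v}" using assms(1) by (auto simp: splits_def)
  then show ?thesis using assms(2) by (auto simp: slice_def)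
qed

lemma inner_cut_unsplit:
  assumes v: "v \<in> verts B" and ns: "\<not> splits X v"
  shows "inner_cut X v = {}"
proof -
  have "e \<notin> cut_edges (A v) (slice X v) - star (A v) (a v)" for e
  proof
    assume e: "e \<in> cut_edges (A v) (slice X v) - star (A v) (a v)"
    then have eA: "e \<in> edges (A v)" using cut_subset by blast
    obtain y z where yz: "e = {y, z}" "y \<in> verts (A v)" "z \<in> verts (A v)"
      using graph_edgeE[OF graph_A[OF v] eA] by metis
    have "y \<noteq> a v" "z \<noteq> a v" using e eA yz by (auto simp: star_def)
    moreover have "(y \<in> slice X v) = (z \<notin> slice X v)"
      using cut_mem[OF graph_A[OF v]] eA yz e by simp
    moreover have "slice X v = {} \<or> slice X v = verts (A v) - {a v}"
      using ns by (auto simp: splits_def)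
    ultimately show False using yz by auto
  qed
  then show ?thesis unfolding inner_cut_eq[OF v] by blast
qed

lemma alpha_edge_cut_iff:
  assumes side: "\<And>v y. v \<in> V \<Longrightarrow> y \<in> verts (A v) - {a v} \<Longrightarrow> (v, y) \<in> X \<longleftrightarrow> v \<in> Z"
    and f: "f \<in> edges B" "f \<subseteq> V"
  shows "alpha_edge f \<in> cut_edges G X \<longleftrightarrow> f \<in> cut_edges B Z"
proof -
  obtain v w where vw: "v \<noteq> w" "v \<in> verts B" "w \<in> verts B" "f = {v, w}"
    using graph_edgeE[OF graph_B f(1)] by metis
  have fs: "f \<in> star B v" "f \<in> star B w" using f(1) vw(4) by (auto simp: star_def)
  have "(v, phi v f) \<in> X \<longleftrightarrow> v \<in> Z" "(w, phi w f) \<in> X \<longleftrightarrow> w \<in> Z"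
    using side phi_port[OF vw(2) fs(1)] phi_port[OF vw(3) fs(2)] f(2) vw(4) by auto
  then show ?thesis
    using alpha_edge_cut[OF f(1) vw(4)] cut_mem[OF graph_B] f(1) vw(4) by simp
qed

text \<open>Two split blocks would contribute at least \<open>2 + 2\<close> edges to a 3-edge cut.\<close>
lemma split_unique:
  assumes X: "X \<subseteq> verts G" and c3: "card (cut_edges G X) = 3"
    and uv: "u \<in> verts B" "v \<in> verts B" "u \<noteq> v" and sp: "splits X u" "splits X v"
  shows False
proof -
  have "card (inner_cut X u) \<ge> 2" "card (inner_cut X v) \<ge> 2"
    using card_inner_cut_ge2[OF uv(1) X] card_inner_cut_ge2[OF uv(2) X] sp by (auto simp: splits_def)
  moreover have sub: "inner_cut X u \<union> inner_cut X v \<subseteq> cut_edges G X" by (auto simp: inner_cut_def)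
  moreover have "inner_cut X u \<inter> inner_cut X v = {}" using uv(3) by (auto simp: inner_cut_def)
  moreover have fin: "finite (cut_edges G X)" by (rule finite_cut[OF graph_G])
  ultimately have "card (inner_cut X u) + card (inner_cut X v) \<le> card (cut_edges G X)"
    using card_Un_disjoint card_mono finite_subset by (metis Un_subset_iff)
  then show False using \<open>card (inner_cut X u) \<ge> 2\<close> \<open>card (inner_cut X v) \<ge> 2\<close> c3 by linarith
qed

definition other_side :: "('b \<times> 'a) set \<Rightarrow> 'b \<Rightarrow> 'b set" where
  "other_side X u = {v \<in> verts B - {u}. slice X v \<noteq> {}}"

text \<open>When \<open>X\<close> splits the block of \<open>u\<close> and has a 3-edge cut, no other block is split, so
  outside \<open>A\<^sub>u\<close> the set \<open>X\<close> consists of the blocks in \<open>other_side X u\<close>.\<close>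
lemma side_outside_split:
  assumes X: "X \<subseteq> verts G" and c3: "card (cut_edges G X) = 3" and u: "u \<in> verts B" "splits X u"
    and v: "v \<in> verts B - {u}" and y: "y \<in> verts (A v) - {a v}"
  shows "(v, y) \<in> X \<longleftrightarrow> v \<in> other_side X u"
proof -
  have "\<not> splits X v" using split_unique[OF X c3 u(1)] v u(2) by blast
  then show ?thesis using unsplit_side[OF _ y] v by (auto simp: other_side_def)
qed

text \<open>The block edges of the cut of \<open>X\<close> use up at least two of its three edges, so at most
  one edge of \<open>B\<close> leaves \<open>other_side X u\<close> away from \<open>u\<close>.  As \<open>B\<close> is cubic and
  3-connected, \<open>other_side X u\<close> is empty or everything but \<open>u\<close>.\<close>
lemma other_side_trivial:
  assumes X: "X \<subseteq> verts G" and c3: "card (cut_edges G X) = 3" and u: "u \<in> verts B" "splits X u"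
  shows "other_side X u = {} \<or> insert u (other_side X u) = verts B"
proof -
  define Z where "Z = other_side X u"
  have side: "(v, y) \<in> X \<longleftrightarrow> v \<in> Z" if "v \<in> verts B - {u}" "y \<in> verts (A v) - {a v}" for v y
    using side_outside_split[OF X c3 u that] by (simp add: Z_def)
  have sub: "alpha_edge ` (cut_edges B Z - star B u) \<subseteq> cut_edges G X - inner_cut X u"
  proof
    fix e assume "e \<in> alpha_edge ` (cut_edges B Z - star B u)"
    then obtain f where f: "f \<in> cut_edges B Z" "f \<notin> star B u" "e = alpha_edge f" by blast
    have fE: "f \<in> edges B" using f(1) cut_subset by blast
    obtain v w where "v \<in> verts B" "w \<in> verts B" "f = {v, w}" using graph_edgeE[OF graph_B fE] by metis
    then have "f \<subseteq> verts B - {u}" using f(2) fE by (auto simp: star_def)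
    then have "alpha_edge f \<in> cut_edges G X"
      using alpha_edge_cut_iff[where V = "verts B - {u}", OF side fE] f(1) by simp
    moreover have "alpha_edge f \<notin> inner_cut X u"
      using fst_alpha_edge_not_single[OF fE] by (simp add: inner_cut_def)
    ultimately show "e \<in> cut_edges G X - inner_cut X u" using f by simp
  qed
  have inj: "inj_on alpha_edge (cut_edges B Z - star B u)"
  proof (rule inj_onI)
    fix f g assume "f \<in> cut_edges B Z - star B u" "g \<in> cut_edges B Z - star B u" "alpha_edge f = alpha_edge g"
    then show "f = g" using alpha_edge_inj[of f g] cut_subset[of B Z] by blast
  qed
  have finK: "finite (cut_edges G X - inner_cut X u)" using finite_cut[OF graph_G] by simp
  have "card (cut_edges B Z - star B u) \<le> card (cut_edges G X - inner_cut X u)"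
    using card_mono[OF finK sub] card_image[OF inj] by simp
  also have "\<dots> = card (cut_edges G X) - card (inner_cut X u)"
    by (rule card_Diff_subset) (use finite_cut[OF graph_G] in \<open>auto simp: inner_cut_def\<close>)
  finally have cz: "card (cut_edges B Z - star B u) \<le> 1"
    using card_inner_cut_ge2[OF u(1) X] u(2) c3 by (simp add: splits_def)
  have uZ: "u \<notin> Z" and ZV: "Z \<subseteq> verts B" by (auto simp: Z_def other_side_def)
  have T: "card (cut_edges B Z) + card (cut_edges B (insert u Z)) = 2 * card (cut_edges B Z - star B u) + 3"
    by (rule card_cut_insert[OF graph_B uZ card_star_B[OF u(1)]])
  show ?thesis unfolding Z_def[symmetric]
  proof (rule ccontr)
    assume h: "\<not> (Z = {} \<or> insert u Z = verts B)"
    have "Z \<noteq> verts B" using uZ u(1) by blast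
    then have "card (cut_edges B Z) \<ge> 3"
      using cubic_cut_ge3[OF cubic_B three_connected_B ZV] h by simp
    moreover have "insert u Z \<subseteq> verts B" using ZV u(1) by simp
    then have "card (cut_edges B (insert u Z)) \<ge> 3"
      using cubic_cut_ge3[OF cubic_B three_connected_B, of "insert u Z"] h by simp
    ultimately show False using T cz by simp
  qed
qed

lemma blockade_split_block:
  assumes X: "X \<subseteq> verts G" and m: "matching (cut_edges G X)" and c3: "card (cut_edges G X) = 3"
    and u: "u \<in> verts B" "splits X u"
  shows "\<exists>K. three_blockade (A u) K"
proof -
  have outside_u: "p \<in> X \<longleftrightarrow> fst p \<in> other_side X u" if "p \<in> verts G" "fst p \<noteq> u" for p
  proof -
    have "fst p \<in> verts B - {u}" "snd p \<in> verts (A (fst p)) - {a (fst p)}"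
      using that verts_G[of p] by auto
    then show ?thesis using side_outside_split[OF X c3 u, of "fst p" "snd p"] by simp
  qed
  have in_block_u: "p \<in> block u" if "p \<in> verts G" "fst p = u" for p
    using that verts_G[of p] by (simp add: in_block)
  from other_side_trivial[OF X c3 u]
  obtain Y where Y: "Y \<subseteq> block u" "cut_edges G Y = cut_edges G X" "splits Y u"
  proof
    assume "other_side X u = {}"
    then have "X \<subseteq> block u" using X outside_u in_block_u by blast
    then show thesis using that u(2) by blast
  next
    assume ZV': "insert u (other_side X u) = verts B"
    define X' where "X' = verts G - X"
    have "X' \<subseteq> block u"
    proof
      fix p assume "p \<in> X'"
      then have pG: "p \<in> verts G" "p \<notin> X" by (auto simp: X'_def)
      have "fst p = u"
      proof (rule ccontr)
        assume ne: "fst p \<noteq> u"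
        have "fst p \<in> verts B" using pG(1) verts_G by blast
        then have "fst p \<in> other_side X u" using ZV' ne by blast
        then show False using outside_u[OF pG(1) ne] pG(2) by blast
      qed
      then show "p \<in> block u" using in_block_u pG(1) by blast
    qed
    moreover have "cut_edges G X' = cut_edges G X" using cut_complement[OF graph_G] by (simp add: X'_def)
    moreover have "slice X' u = (verts (A u) - {a u}) - slice X u"
      using slice_subset[OF X, of u] u(1) by (auto simp: slice_def X'_def verts_G)
    then have "splits X' u" using u(2) slice_subset[OF X, of u] by (auto simp: splits_def)
    ultimately show thesis using that by blast
  qed
  then show ?thesis
    using blockade_in_block[OF u(1) Y(1)] m c3 by (auto simp: splits_def)
qed

lemma cut_no_split:
  assumes X: "X \<subseteq> verts G" and ns: "\<And>v. v \<in> verts B \<Longrightarrow> \<not> splits X v"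
    and U: "U = {v \<in> verts B. slice X v \<noteq> {}}"
  shows "cut_edges G X = alpha_edge ` cut_edges B U"
proof -
  have side: "(v, y) \<in> X \<longleftrightarrow> v \<in> U" if "v \<in> verts B" "y \<in> verts (A v) - {a v}" for v y
    using unsplit_side[OF ns that(2)] that by (auto simp: U)
  show ?thesis
  proof (rule set_eqI, rule iffI)
    fix e assume e: "e \<in> cut_edges G X"
    then show "e \<in> alpha_edge ` cut_edges B U"
    proof (cases rule: cut_G_cases)
      case (inner v)
      then show ?thesis using inner_cut_unsplit[OF inner(1) ns[OF inner(1)]] by simp
    next
      case (alpha f)
      then have "f \<subseteq> verts B" using graph_edgeE[OF graph_B alpha(1)] by blast
      then have "f \<in> cut_edges B U" using alpha_edge_cut_iff[OF side alpha(1)] e alpha(2) by simp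
      then show ?thesis using alpha(2) by blast
    qed
  next
    fix e assume "e \<in> alpha_edge ` cut_edges B U"
    then obtain f where f: "f \<in> cut_edges B U" "e = alpha_edge f" by blast
    have fE: "f \<in> edges B" using f(1) cut_subset by blast
    then have "f \<subseteq> verts B" using graph_edgeE[OF graph_B fE] by blast
    then show "e \<in> cut_edges G X" using alpha_edge_cut_iff[OF side fE] f by simp
  qed
qed

text \<open>If no block is split, a 3-blockade of \<open>G\<close> is the \<open>\<alpha>\<close>-image of a 3-edge cut of \<open>B\<close>,
  which is a star since \<open>B\<close> has no 3-blockade.\<close>
lemma blockade_no_split:
  assumes noB: "\<not> (\<exists>K. three_blockade B K)"
    and X: "X \<subseteq> verts G" "X \<noteq> {}" "X \<noteq> verts G" and c3: "card (cut_edges G X) = 3"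
    and ns: "\<And>v. v \<in> verts B \<Longrightarrow> \<not> splits X v"
  shows "\<exists>w\<in>verts B. cut_edges G X = alpha_edge ` star B w"
proof -
  define U where "U = {v \<in> verts B. slice X v \<noteq> {}}"
  have Keq: "cut_edges G X = alpha_edge ` cut_edges B U" by (rule cut_no_split[OF X(1) ns U_def])
  have UV: "U \<subseteq> verts B" by (auto simp: U_def)
  have "inj_on alpha_edge (cut_edges B U)"
  proof (rule inj_onI)
    fix f g assume "f \<in> cut_edges B U" "g \<in> cut_edges B U" "alpha_edge f = alpha_edge g"
    then show "f = g" using alpha_edge_inj[of f g] cut_subset[of B U] by blast
  qed
  then have cU: "card (cut_edges B U) = 3" using c3 unfolding Keq by (simp add: card_image)
  have nonempty_slice: "p \<in> verts G \<Longrightarrow> p \<in> X \<longleftrightarrow> fst p \<in> U" for p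
    using unsplit_side[OF ns, of "fst p" "snd p"] verts_G[of p] by (auto simp: U_def)
  obtain p where "p \<in> X" using X(2) by blast
  then have U0: "U \<noteq> {}" using nonempty_slice X(1) by blast
  obtain q where q: "q \<in> verts G" "q \<notin> X" using X(1,3) by blast
  then have UV': "U \<noteq> verts B" using nonempty_slice[OF q(1)] verts_G[of q] by blast
  show ?thesis
  proof (cases "matching (cut_edges B U)")
    case True
    have "edge_cut B (cut_edges B U)"
      unfolding edge_cut_iff using UV U0 UV' by (intro exI[of _ U]) simp
    then have "three_blockade B (cut_edges B U)" using True cU by (simp add: three_blockade_def)
    then show ?thesis using noB by blast
  next
    case False
    then obtain w where w: "w \<in> verts B" "cut_edges B U = star B w"
      using cubic_three_cut_star[OF cubic_B three_connected_B UV U0 UV' cU False] by blast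
    show ?thesis using Keq w by (intro bexI[of _ w]) simp_all
  qed
qed

theorem blockade_is_alpha_star:
  assumes noB: "\<not> (\<exists>K. three_blockade B K)"
    and noA: "\<forall>u\<in>verts B. \<not> (\<exists>K. three_blockade (A u) K)"
    and K: "three_blockade G K"
  shows "\<exists>w\<in>verts B. K = alpha_edge ` star B w"
proof -
  obtain X where X: "X \<subseteq> verts G" "X \<noteq> {}" "X \<noteq> verts G" and KX: "K = cut_edges G X"
    using K by (auto simp: three_blockade_def edge_cut_iff)
  have m: "matching (cut_edges G X)" and c3: "card (cut_edges G X) = 3"
    using K KX by (auto simp: three_blockade_def)
  have "\<not> splits X u" if "u \<in> verts B" for u
    using blockade_split_block[OF X(1) m c3 that] noA that by blast
  then show ?thesis using blockade_no_split[OF noB X c3] KX by blast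
qed

end

theorem mainTheorem4:
  fixes B :: "'b graph" and A :: "'b \<Rightarrow> 'a graph" and a :: "'b \<Rightarrow> 'a"
    and phi :: "'b \<Rightarrow> 'b set \<Rightarrow> 'a"
  assumes B: "cubic B" "three_connected B"
    and A: "\<And>u. u \<in> verts B \<Longrightarrow> cubic (A u) \<and> three_connected (A u) \<and> a u \<in> verts (A u)"
    and phi: "\<And>u. u \<in> verts B \<Longrightarrow>
       bij_betw (phi u) {e \<in> edges B. u \<in> e} (nbrs (A u) (a u))"
    and h0: "card (verts B) mod 6 = 0" "\<And>u. u \<in> verts B \<Longrightarrow> card (verts (A u)) mod 6 = 2"
    and h1: "\<And>u x. u \<in> verts B \<Longrightarrow> x \<in> verts (A u) - (nbrs (A u) (a u) \<union> {a u}) \<Longrightarrow>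
       (\<exists>y\<in>nbrs (A u) (a u). {x, y} \<in> edges (A u)) \<Longrightarrow>
       \<not> has_lambda_factor (delete (A u) (nbrs (A u) (a u) \<union> {a u, x}))"
    and h2: "\<And>u z. u \<in> verts B \<Longrightarrow> {a u, z} \<in> edges (A u) \<Longrightarrow>
       has_lambda_factor (delete (A u) {a u, z})"
    and h3: "\<And>u w1 w2 w4 w5. u \<in> verts B \<Longrightarrow> distinct [w1, w2, a u, w4, w5] \<Longrightarrow>
       {w1, w2} \<in> edges (A u) \<Longrightarrow> {w2, a u} \<in> edges (A u) \<Longrightarrow>
       {a u, w4} \<in> edges (A u) \<Longrightarrow> {w4, w5} \<in> edges (A u) \<Longrightarrow>
       has_lambda_factor (delete (A u) {w1, w2, a u, w4, w5})"
  shows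
    "(\<forall>P. lambda_factor (compose B A a phi) P \<longrightarrow>
        lambda_factor B (verts B, alpha_preimage B phi P) \<and>
        Fvec B A a phi P = difactor (verts B, alpha_preimage B phi P))
   \<and> (\<forall>P. lambda_factor (compose B A a phi) P \<longrightarrow>
        \<not> (\<exists>K. three_blockade B K) \<longrightarrow>
        (\<forall>u\<in>verts B. \<not> (\<exists>K. three_blockade (A u) K)) \<longrightarrow>
        (\<forall>K. three_blockade (compose B A a phi) K \<longrightarrow> card (K \<inter> edges P) \<in> {1, 2}))
   \<and> (\<forall>Q. lambda_factor B Q \<longrightarrow>
        (\<exists>P. lambda_factor (compose B A a phi) P \<and> Fvec B A a phi P = difactor Q))"
proof -
  interpret composition B A a phi
    by unfold_locales (use B A phi h0(2) in auto)
  have a1_a2: "lambda_factor B (verts B, alpha_preimage B phi P) \<and>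
      Fvec B A a phi P = difactor (verts B, alpha_preimage B phi P) \<and>
      (\<not> (\<exists>K. three_blockade B K) \<longrightarrow> (\<forall>u\<in>verts B. \<not> (\<exists>K. three_blockade (A u) K)) \<longrightarrow>
        (\<forall>K. three_blockade G K \<longrightarrow> card (K \<inter> edges P) \<in> {1, 2}))"
    if P: "lambda_factor G P" for P
  proof -
    interpret factor_of_G_h1 B A a phi P
      by unfold_locales (use P h1 in auto)
    show ?thesis
      using QP_lambda_factor Fvec_QP blockade_is_alpha_star card_alpha_star_P
      unfolding QP_def by metis
  qed
  show ?thesis using a1_a2 lift_exists[OF h2 h3] by blast
qed

end
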